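(* For every multi-sender unicast index-coding instance (with any sender sets $\mathcal S_1,\dots,\mathcal S_K$, any side-information sets $\mathcal A_1,\dots,\mathcal A_N$ and any link capacities $C_1,\dots,C_K>0$), the region $\mathcal R_{\mathrm{CLS}}$ defined in the context is contained in the capacity region: $\mathcal R_{\mathrm{CLS}}\subseteq\mathcal C$.
   Context: Model. There are $N$ independent messages $M_1,\dots,M_N$, where for block length $n$ and rates $R_j\ge 0$, $M_j$ is uniform on $[1:2^{nR_j}]$. There are $K$ senders; sender $k$ knows the messages $M_i$, $i\in\mathcal S_k\subseteq[1:N]$ (the sets $\mathcal S_k$ are pairwise distinct and $\bigcup_k\mathcal S_k=[1:N]$), and is connected to all receivers by a noiseless broadcast link of capacity $C_k>0$ bits per channel use. There are $N$ receivers; receiver $j$ knows $M_i$, $i\in\mathcal A_j\subseteq[1:N]\setminus\{j\}$, and requests $M_j$. For real $c\ge0$ write $[1:2^c)=\{1,\dots,2^{\lfloor c\rfloor}\}$. A code of length $n$ consists of encoders $f_k:\prod_{i\in\mathcal S_k}[1:2^{nR_i}]\to[1:2^{nC_k})$ producing $L_k$, and decoders $g_j$ mapping $(L_1,\dots,L_K)$ and $(M_i)_{i\in\mathcal A_j}$ to an estimate $\hat M_j$. A rate tuple $(R_1,\dots,R_N)$ is achievable if there is a sequence of such codes with $\Pr[(\hat M_1,\dots,\hat M_N)\ne(M_1,\dots,M_N)]\to0$ as $n\to\infty$; the capacity region $\mathcal C$ is the closure of the set of achievable rate tuples. Definition of $\mathcal R_{\mathrm{CLS}}$. A joint link-and-sender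 partition is a pair $(\tilde\Pi,\mathbf C_{\tilde\Pi})$ where $\tilde\Pi$ is a collection of pairwise distinct nonempty subsets $\tilde P\subseteq[1:K]$ with $\bigcup_{\tilde P\in\tilde\Pi}\tilde P=[1:K]$ (the subsets may overlap), and $\mathbf C_{\tilde\Pi}=(C_{k,\tilde P}:k\in\tilde P,\tilde P\in\tilde\Pi)$ satisfies $C_{k,\tilde P}>0$ and $\sum_{\tilde P\in\tilde\Pi:k\in\tilde P}C_{k,\tilde P}\le C_k$ for each $k$ (admissible). For $\tilde P\in\tilde\Pi$ let $\mathcal S_{\tilde P}=\bigcup_{k\in\tilde P}\mathcal S_k$ and $\mathcal A_{j,\tilde P}=\mathcal A_j\cap\mathcal S_{\tilde P}$. For $\tilde{\mathcal K}\subseteq\tilde P$ let $\tilde{\mathcal K}^c=\tilde P\setminus\tilde{\mathcal K}$ and $\mathcal I_{\tilde{\mathcal K}}=\bigcup_{k\in\tilde{\mathcal K}}\{\mathcal J\ne\emptyset:\mathcal J\subseteq\mathcal S_k\}$. A decoding choice for $\tilde P$ is a family $\{\mathcal D_{j,\tilde P}:j\in\mathcal S_{\tilde P}\}$ with $j\in\mathcal D_{j,\tilde P}\subseteq\mathcal S_{\tilde P}\setminus\mathcal A_{j,\tilde P}$. For a fixed decoding choice, let $\mathcal R(\{\mathcal D_{j,\tilde P}\},\mathbf C_{\tilde P}\mid\{\mathcal A_{j,\tilde P}\})$ be the set of $(R_{j,\tilde P}:j\in\mathcal S_{\tilde P})\in\mathbb R_+^{|\mathcal S_{\tilde P}|}$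 for which there exist composite rates $\gamma_{\mathcal J,\tilde P}\ge0$, one for each $\mathcal J\in\mathcal I_{\tilde P}$ (and set $\gamma_{\mathcal J,\tilde P}=0$ for nonempty $\mathcal J\subseteq\mathcal S_{\tilde P}$ not in $\mathcal I_{\tilde P}$), such that (a) $\sum_{i\in\mathcal T}R_{i,\tilde P}<\sum_{\mathcal J_1\subseteq\mathcal D_{j,\tilde P}\cup\mathcal A_{j,\tilde P},\ \mathcal J_1\cap\mathcal T\ne\emptyset}\gamma_{\mathcal J_1,\tilde P}$ for all nonempty $\mathcal T\subseteq\mathcal D_{j,\tilde P}$ and all $j\in\mathcal S_{\tilde P}$; and (b) $\sum_{\mathcal J_2\in\mathcal I_{\tilde{\mathcal K}},\ \mathcal J_2\notin\mathcal I_{\tilde{\mathcal K}^c},\ \mathcal J_2\not\subseteq\mathcal A_{j,\tilde P}}\gamma_{\mathcal J_2,\tilde P}<\sum_{k\in\tilde{\mathcal K}}C_{k,\tilde P}$ for all $j\in\mathcal S_{\tilde P}$ and all nonempty $\tilde{\mathcal K}\subseteq\tilde P$. Let $\mathcal R_{(\tilde P,\mathbf C_{\tilde P})}$ be the union of these regions over all decoding choices for $\tilde P$. Let $\mathcal R_{\mathrm{CLS}}(\tilde\Pi,\mathbf C_{\tilde\Pi})$ be the set of $(R_1,\dots,R_N)\in\mathbb R_+^N$ such that $R_j=\sum_{\tilde P\in\tilde\Pi:j\in\mathcal S_{\tilde P}}R_{j,\tilde P}$ for all $j$, for some $(R_{j,\tilde P}:j\in\mathcal S_{\tilde P})\in\mathcal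 R_{(\tilde P,\mathbf C_{\tilde P})}$ for every $\tilde P\in\tilde\Pi$ and some admissible $\mathbf C_{\tilde\Pi}$. Finally $\mathcal R_{\mathrm{CLS}}$ is the convex hull of the union of $\mathcal R_{\mathrm{CLS}}(\tilde\Pi,\mathbf C_{\tilde\Pi})$ over all such $\tilde\Pi$. *)

theory Defs
  imports "HOL-Analysis.Analysis"
begin

text \<open>Messages are indexed by a finite type 'm
 (playing the role of [1:N]), senders by a finite type 'k (playing the role of [1:K]).
 S k = set of messages known to sender k, A j = side information of receiver j,
 C k = capacity of the broadcast link of sender k.\<close>

text \<open>[1:2^c) = {1, ..., 2^floor c}\<close>
definition idx_set :: "real \<Rightarrow> nat set" where
  "idx_set c = {1 .. 2 ^ nat \<lfloor>c\<rfloor>}"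

definition msg_set :: "nat \<Rightarrow> real ^ 'm \<Rightarrow> ('m \<Rightarrow> nat) set" where
  "msg_set n R = {m. \<forall>i. m i \<in> idx_set (real n * R $ i)}"

text \<open>A code of length n: encoders f k (depending only on the messages in S k, with output
 in [1:2^(nC_k))) and decoders g j (taking (L_1,...,L_K) and depending on the messages only
 through the side information A j).\<close>
definition is_code ::
  "('k \<Rightarrow> 'm set) \<Rightarrow> ('m \<Rightarrow> 'm set) \<Rightarrow> ('k \<Rightarrow> real) \<Rightarrow> nat \<Rightarrow> real ^ 'm
   \<Rightarrow> ('k \<Rightarrow> ('m \<Rightarrow> nat) \<Rightarrow> nat) \<Rightarrow> ('m \<Rightarrow> ('k \<Rightarrow> nat) \<Rightarrow> ('m \<Rightarrow> nat) \<Rightarrow> nat) \<Rightarrow> bool" where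
  "is_code S A C n R f g \<longleftrightarrow>
     (\<forall>k. \<forall>m \<in> msg_set n R. f k m \<in> idx_set (real n * C k)) \<and>
     (\<forall>k. \<forall>m \<in> msg_set n R. \<forall>m' \<in> msg_set n R.
          (\<forall>i \<in> S k. m i = m' i) \<longrightarrow> f k m = f k m') \<and>
     (\<forall>j L. \<forall>m \<in> msg_set n R. \<forall>m' \<in> msg_set n R.
          (\<forall>i \<in> A j. m i = m' i) \<longrightarrow> g j L m = g j L m')"

text \<open>Error probability under uniformly distributed independent messages.\<close>
definition err_prob ::
  "nat \<Rightarrow> real ^ 'm \<Rightarrow> ('k \<Rightarrow> ('m \<Rightarrow> nat) \<Rightarrow> nat)
   \<Rightarrow> ('m \<Rightarrow> ('k \<Rightarrow> nat) \<Rightarrow> ('m \<Rightarrow> nat) \<Rightarrow> nat) \<Rightarrow> real" where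
  "err_prob n R f g =
     real (card {m \<in> msg_set n R. \<exists>j. g j (\<lambda>k. f k m) m \<noteq> m j})
     / real (card (msg_set n R))"

definition achievable ::
  "('k \<Rightarrow> 'm set) \<Rightarrow> ('m \<Rightarrow> 'm set) \<Rightarrow> ('k \<Rightarrow> real) \<Rightarrow> real ^ 'm \<Rightarrow> bool" where
  "achievable S A C R \<longleftrightarrow> (\<forall>i. R $ i \<ge> 0) \<and>
     (\<exists>f g. (\<forall>n. is_code S A C n R (f n) (g n)) \<and>
            (\<lambda>n. err_prob n R (f n) (g n)) \<longlonglongrightarrow> 0)"

definition capacity_region ::
  "('k \<Rightarrow> 'm set) \<Rightarrow> ('m \<Rightarrow> 'm set) \<Rightarrow> ('k \<Rightarrow> real) \<Rightarrow> (real ^ 'm) set" where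
  "capacity_region S A C = closure {R. achievable S A C R}"

definition SP :: "('k \<Rightarrow> 'm set) \<Rightarrow> 'k set \<Rightarrow> 'm set" where
  "SP S P = (\<Union>k\<in>P. S k)"

definition Iset :: "('k \<Rightarrow> 'm set) \<Rightarrow> 'k set \<Rightarrow> 'm set set" where
  "Iset S K = (\<Union>k\<in>K. {J. J \<noteq> {} \<and> J \<subseteq> S k})"

definition decoding_choice ::
  "('k \<Rightarrow> 'm set) \<Rightarrow> ('m \<Rightarrow> 'm set) \<Rightarrow> 'k set \<Rightarrow> ('m \<Rightarrow> 'm set) \<Rightarrow> bool" where
  "decoding_choice S A P D \<longleftrightarrow>
     (\<forall>j \<in> SP S P. j \<in> D j \<and> D j \<subseteq> SP S P - (A j \<inter> SP S P))"

text \<open>The region R({D_{j,P}}, C_P | {A_{j,P}}); r holds (R_{j,P}) on S_P and is 0 elsewhere;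
 CP k = C_{k,P}.\<close>
definition region_D ::
  "('k \<Rightarrow> 'm set) \<Rightarrow> ('m \<Rightarrow> 'm set) \<Rightarrow> 'k set \<Rightarrow> ('k \<Rightarrow> real) \<Rightarrow> ('m \<Rightarrow> 'm set)
   \<Rightarrow> (real ^ 'm) set" where
  "region_D S A P CP D = {r.
     (\<forall>j. r $ j \<ge> 0) \<and> (\<forall>j. j \<notin> SP S P \<longrightarrow> r $ j = 0) \<and>
     (\<exists>\<gamma> :: 'm set \<Rightarrow> real.
        (\<forall>J \<in> Iset S P. \<gamma> J \<ge> 0) \<and> (\<forall>J. J \<notin> Iset S P \<longrightarrow> \<gamma> J = 0) \<and>
        (\<forall>j \<in> SP S P. \<forall>T. T \<noteq> {} \<and> T \<subseteq> D j \<longrightarrow>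
           (\<Sum>i\<in>T. r $ i) <
           (\<Sum>J1 \<in> {J. J \<subseteq> D j \<union> (A j \<inter> SP S P) \<and> J \<inter> T \<noteq> {}}. \<gamma> J1)) \<and>
        (\<forall>j \<in> SP S P. \<forall>K. K \<noteq> {} \<and> K \<subseteq> P \<longrightarrow>
           (\<Sum>J2 \<in> {J \<in> Iset S K. J \<notin> Iset S (P - K) \<and> \<not> J \<subseteq> A j \<inter> SP S P}. \<gamma> J2)
           < (\<Sum>k\<in>K. CP k)))}"

definition region_P ::
  "('k \<Rightarrow> 'm set) \<Rightarrow> ('m \<Rightarrow> 'm set) \<Rightarrow> 'k set \<Rightarrow> ('k \<Rightarrow> real) \<Rightarrow> (real ^ 'm) set" where
  "region_P S A P CP = (\<Union>D \<in> {D. decoding_choice S A P D}. region_D S A P CP D)"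

text \<open>Joint link-and-sender partition (Pis, C_Pi); CPi P k = C_{k,P}.\<close>
definition link_sender_partition :: "'k set set \<Rightarrow> bool" where
  "link_sender_partition Pis \<longleftrightarrow> (\<forall>P\<in>Pis. P \<noteq> {}) \<and> \<Union>Pis = UNIV"

definition admissible :: "('k \<Rightarrow> real) \<Rightarrow> 'k set set \<Rightarrow> ('k set \<Rightarrow> 'k \<Rightarrow> real) \<Rightarrow> bool" where
  "admissible C Pis CPi \<longleftrightarrow>
     (\<forall>P\<in>Pis. \<forall>k\<in>P. CPi P k > 0) \<and>
     (\<forall>k. (\<Sum>P \<in> {P \<in> Pis. k \<in> P}. CPi P k) \<le> C k)"

definition R_CLS_part ::
  "('k \<Rightarrow> 'm set) \<Rightarrow> ('m \<Rightarrow> 'm set) \<Rightarrow> 'k set set \<Rightarrow> ('k set \<Rightarrow> 'k \<Rightarrow> real) \<Rightarrow> (real ^ 'm) set" where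
  "R_CLS_part S A Pis CPi = {R. (\<forall>j. R $ j \<ge> 0) \<and>
     (\<exists>rr :: 'k set \<Rightarrow> real ^ 'm.
        (\<forall>P\<in>Pis. rr P \<in> region_P S A P (CPi P)) \<and>
        (\<forall>j. R $ j = (\<Sum>P \<in> {P \<in> Pis. j \<in> SP S P}. rr P $ j)))}"

definition R_CLS ::
  "('k \<Rightarrow> 'm set) \<Rightarrow> ('m \<Rightarrow> 'm set) \<Rightarrow> ('k \<Rightarrow> real) \<Rightarrow> (real ^ 'm) set" where
  "R_CLS S A C = convex hull
     (\<Union>{R_CLS_part S A Pis CPi | Pis CPi. link_sender_partition Pis \<and> admissible C Pis CPi})"

end

theory Submission
  imports Defs
begin

text \<open>Achievability by random coding with superposition. Every message is split into
independent sub-messages, one for each piece of the partition. Within a piece, every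
subset J of messages known to one sender is mapped by a random hash to a composite
message of rate \<gamma>_J, and every sender forwards a random hash of the composites it
knows over its share of the link. Receiver j first looks for the unique composite
tuple consistent with the received link symbols and its side information, then for the
unique tuple of sub-messages in D_j consistent with the composites; conditions (b) and
(a) make the expected number of wrong candidates in the two stages exponentially small.
Averaging over all hash functions therefore yields deterministic codes whose error
probability tends to zero. A convex combination of rate tuples needs no separate
time-sharing argument: scaling the rates and link shares of every piece by its weight
gives a single, larger partition.\<close>

definition hash_space ::
  "'x set \<Rightarrow> ('x \<Rightarrow> 'd set) \<Rightarrow> ('x \<Rightarrow> nat) \<Rightarrow> ('x \<Rightarrow> 'd \<Rightarrow> nat) set" where
  "hash_space X Dom B = PiE X (\<lambda>x. PiE (Dom x) (\<lambda>_. {1..B x}))"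

lemma card_PiE_collision_mult:
  fixes Dom :: "'d set" and B :: nat
  assumes fin: "finite Dom" and ab: "a \<in> Dom" "b \<in> Dom" "a \<noteq> b"
  shows "card {f \<in> PiE Dom (\<lambda>_. {1..B}). f a = f b} * B = card (PiE Dom (\<lambda>_. {1..B}))"
proof -
  let ?F = "PiE Dom (\<lambda>_. {1..B})"
  \<comment> \<open>\<open>[f a = f b] = \<Sum>\<^sub>y [f a = y] [f b = y]\<close>, and summing a product over \<open>f\<close> factorizes.\<close>
  define \<psi> where "\<psi> y d v = (if d = a \<or> d = b then (if v = y then 1 else 0) else (1::nat))"
    for y :: nat and d and v :: nat
  have "card {f \<in> ?F. f a = f b} = (\<Sum>f\<in>?F. if f a = f b then 1 else (0::nat))"
    using fin by (simp add: sum.If_cases finite_PiE Int_def)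
  also have "\<dots> = (\<Sum>f\<in>?F. \<Sum>y\<in>{1..B}. \<Prod>d\<in>Dom. \<psi> y d (f d))"
  proof (rule sum.cong[OF refl])
    fix f assume f: "f \<in> ?F"
    have p: "(\<Prod>d\<in>Dom. \<psi> y d (f d)) = (if f a = y then 1 else 0) * (if f b = y then 1 else 0)"
      for y
    proof -
      have "(\<Prod>d\<in>Dom. \<psi> y d (f d)) = \<psi> y a (f a) * (\<Prod>d\<in>Dom - {a}. \<psi> y d (f d))"
        using fin ab by (simp add: prod.remove)
      also have "(\<Prod>d\<in>Dom - {a}. \<psi> y d (f d))
          = \<psi> y b (f b) * (\<Prod>d\<in>Dom - {a} - {b}. \<psi> y d (f d))"
        by (rule prod.remove) (use fin ab in auto)
      also have "(\<Prod>d\<in>Dom - {a} - {b}. \<psi> y d (f d)) = 1"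
        by (rule prod.neutral) (simp add: \<psi>_def)
      finally show ?thesis by (simp add: \<psi>_def)
    qed
    have "f a \<in> {1..B}" using f ab by auto
    then show "(if f a = f b then 1 else 0) = (\<Sum>y\<in>{1..B}. \<Prod>d\<in>Dom. \<psi> y d (f d))"
      unfolding p
      by (simp add: sum.delta' mult.commute[of "if f a = _ then 1 else 0"] if_distrib cong: if_cong)
  qed
  also have "\<dots> = (\<Sum>y\<in>{1..B}. \<Sum>f\<in>?F. \<Prod>d\<in>Dom. \<psi> y d (f d))"
    by (rule sum.swap)
  also have "\<dots> = (\<Sum>y\<in>{1..B}. \<Prod>d\<in>Dom. \<Sum>v\<in>{1..B}. \<psi> y d v)"
    using fin by (simp add: prod_sum_PiE)
  also have "\<dots> = (\<Sum>y\<in>{1..B}. B ^ (card Dom - 2))"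
  proof (rule sum.cong[OF refl])
    fix y assume y: "y \<in> {1..B}"
    have "(\<Prod>d\<in>Dom. \<Sum>v\<in>{1..B}. \<psi> y d v) = (\<Prod>d\<in>Dom - {a} - {b}. \<Sum>v\<in>{1..B}. \<psi> y d v)"
    proof -
      have "(\<Prod>d\<in>Dom. \<Sum>v\<in>{1..B}. \<psi> y d v)
          = (\<Sum>v\<in>{1..B}. \<psi> y a v) * (\<Prod>d\<in>Dom - {a}. \<Sum>v\<in>{1..B}. \<psi> y d v)"
        using fin ab by (simp add: prod.remove)
      also have "(\<Prod>d\<in>Dom - {a}. \<Sum>v\<in>{1..B}. \<psi> y d v)
          = (\<Sum>v\<in>{1..B}. \<psi> y b v) * (\<Prod>d\<in>Dom - {a} - {b}. \<Sum>v\<in>{1..B}. \<psi> y d v)"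
        by (rule prod.remove) (use fin ab in auto)
      finally show ?thesis using y by (simp add: \<psi>_def sum.If_cases)
    qed
    also have "\<dots> = (\<Prod>d\<in>Dom - {a} - {b}. B)"
      by (rule prod.cong[OF refl]) (simp add: \<psi>_def)
    also have "\<dots> = B ^ (card Dom - 2)"
      using fin ab by (simp add: card_Diff_subset numeral_2_eq_2)
    finally show "(\<Prod>d\<in>Dom. \<Sum>v\<in>{1..B}. \<psi> y d v) = B ^ (card Dom - 2)" .
  qed
  also have "\<dots> = B * B ^ (card Dom - 2)" by simp
  finally have c: "card {f \<in> ?F. f a = f b} = B * B ^ (card Dom - 2)" .
  have "card Dom \<ge> 2"
  proof -
    have "{a,b} \<subseteq> Dom" using ab by auto
    then have "card {a,b} \<le> card Dom" using fin by (rule card_mono[rotated])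
    then show ?thesis using ab by simp
  qed
  then obtain c where "card Dom = c + 2" by (metis le_add_diff_inverse2)
  then have "B * B ^ (card Dom - 2) * B = B ^ card Dom" by (simp add: power_add mult.commute)
  moreover have "card ?F = B ^ card Dom" using fin by (simp add: card_PiE)
  ultimately show ?thesis using c by simp
qed

lemma card_hash_space_collisions_mult:
  fixes X :: "'x set" and Dom :: "'x \<Rightarrow> 'd set" and B :: "'x \<Rightarrow> nat"
  assumes fin: "finite X" and finD: "\<forall>x\<in>X. finite (Dom x)" and KX: "K \<subseteq> X"
    and ab: "\<forall>x\<in>K. a x \<in> Dom x \<and> b x \<in> Dom x \<and> a x \<noteq> b x"
  shows "card {h \<in> hash_space X Dom B. \<forall>x\<in>K. h x (a x) = h x (b x)} * (\<Prod>x\<in>K. B x)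
    = card (hash_space X Dom B)"
proof -
  let ?F = "\<lambda>x. PiE (Dom x) (\<lambda>_. {1..B x})"
  let ?G = "\<lambda>x. {f \<in> ?F x. x \<in> K \<longrightarrow> f (a x) = f (b x)}"
  have "{h \<in> hash_space X Dom B. \<forall>x\<in>K. h x (a x) = h x (b x)} = PiE X ?G"
    using KX unfolding hash_space_def by (auto simp: PiE_iff extensional_def)
  then have "card {h \<in> hash_space X Dom B. \<forall>x\<in>K. h x (a x) = h x (b x)} = (\<Prod>x\<in>X. card (?G x))"
    using fin by (simp add: card_PiE)
  moreover have "(\<Prod>x\<in>K. B x) = (\<Prod>x\<in>X. if x \<in> K then B x else 1)"
  proof -
    have "(\<Prod>x\<in>X. if x \<in> K then B x else 1) = (\<Prod>x\<in>K. if x \<in> K then B x else 1)"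
      by (rule prod.mono_neutral_right[OF fin KX]) auto
    then show ?thesis by simp
  qed
  moreover have "card (?G x) * (if x \<in> K then B x else 1) = card (?F x)" if "x \<in> X" for x
    using card_PiE_collision_mult[of "Dom x" "a x" "b x" "B x"] finD ab that by auto
  ultimately show ?thesis
    using fin unfolding hash_space_def by (simp add: card_PiE prod.distrib[symmetric])
qed
lemma card_PiE_differ_on_le:
  assumes "finite T" and "\<forall>y\<in>T. finite (Rg y)"
  shows "card {v \<in> PiE Y Rg. {y\<in>Y. v y \<noteq> z y} = T} \<le> (\<Prod>y\<in>T. card (Rg y))"
proof -
  let ?V = "{v \<in> PiE Y Rg. {y\<in>Y. v y \<noteq> z y} = T}"
  have "inj_on (\<lambda>v. restrict v T) ?V"
  proof (rule inj_onI)
    fix v w assume v: "v \<in> ?V" and w: "w \<in> ?V" and vw: "restrict v T = restrict w T"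
    show "v = w"
    proof
      fix y
      show "v y = w y"
      proof (cases "y \<in> T")
        case True
        then show ?thesis using fun_cong[OF vw, of y] by simp
      next
        case False
        then show ?thesis using v w by (cases "y \<in> Y") (auto simp: PiE_def extensional_def)
      qed
    qed
  qed
  moreover have "(\<lambda>v. restrict v T) ` ?V \<subseteq> PiE T Rg"
    by (auto simp: PiE_iff)
  ultimately have "card ?V \<le> card (PiE T Rg)"
    using assms by (intro card_inj_on_le) (auto intro: finite_PiE)
  also have "\<dots> = (\<Prod>y\<in>T. card (Rg y))"
    using assms(1) by (rule card_PiE)
  finally show ?thesis .
qed

lemma card_Diff_singleton_ge_1: "finite X \<Longrightarrow> \<exists>w\<in>X. w \<noteq> z \<Longrightarrow> 1 \<le> real (card (X - {z}))"
proof -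
  assume "finite X" and "\<exists>w\<in>X. w \<noteq> z"
  then have "card (X - {z}) > 0" by (auto simp: card_gt_0_iff)
  then show ?thesis by simp
qed

lemma sum_swap_nested:
  "(\<Sum>b\<in>B. \<Sum>i\<in>I. \<Sum>j\<in>J i. f b i j) = (\<Sum>i\<in>I. \<Sum>j\<in>J i. \<Sum>b\<in>B. f b i j)"
proof -
  have "(\<Sum>b\<in>B. \<Sum>i\<in>I. \<Sum>j\<in>J i. f b i j) = (\<Sum>i\<in>I. \<Sum>b\<in>B. \<Sum>j\<in>J i. f b i j)"
    by (rule sum.swap)
  also have "\<dots> = (\<Sum>i\<in>I. \<Sum>j\<in>J i. \<Sum>b\<in>B. f b i j)"
    by (rule sum.cong[OF refl], rule sum.swap)
  finally show ?thesis .
qed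

lemma sum_swap_nested2:
  "(\<Sum>a\<in>A. \<Sum>b\<in>B. \<Sum>i\<in>I. \<Sum>j\<in>J i. f a b i j) = (\<Sum>i\<in>I. \<Sum>j\<in>J i. \<Sum>a\<in>A. \<Sum>b\<in>B. f a b i j)"
proof -
  have "(\<Sum>a\<in>A. \<Sum>b\<in>B. \<Sum>i\<in>I. \<Sum>j\<in>J i. f a b i j) = (\<Sum>a\<in>A. \<Sum>i\<in>I. \<Sum>j\<in>J i. \<Sum>b\<in>B. f a b i j)"
    by (rule sum.cong[OF refl], rule sum_swap_nested)
  also have "\<dots> = (\<Sum>i\<in>I. \<Sum>j\<in>J i. \<Sum>a\<in>A. \<Sum>b\<in>B. f a b i j)"
    by (rule sum_swap_nested)
  finally show ?thesis .
qed

lemma hash_space_finite_nonempty: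
  assumes "finite X" "\<forall>x\<in>X. finite (Dom x)" "\<forall>x. B x \<ge> 1"
  shows "finite (hash_space X Dom B)" "hash_space X Dom B \<noteq> {}"
proof -
  show "finite (hash_space X Dom B)" unfolding hash_space_def using assms by (auto intro!: finite_PiE)
  have "\<forall>x\<in>X. PiE (Dom x) (\<lambda>_. {1..B x}) \<noteq> {}" using assms(3) by (auto simp: PiE_eq_empty_iff)
  then show "hash_space X Dom B \<noteq> {}" unfolding hash_space_def by (simp add: PiE_eq_empty_iff)
qed

lemma real_eq_divide_of_mult_eq: "(a::nat) * p = b \<Longrightarrow> p > 0 \<Longrightarrow> real a = real b / real p"
  by (metis nonzero_mult_div_cancel_right of_nat_0_less_iff of_nat_mult less_irrefl)

lemma card_hash_space_agree:
  fixes X :: "'x set" and Dom :: "'x \<Rightarrow> ('y \<Rightarrow> 'v) set" and B :: "'x \<Rightarrow> nat"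
    and Y :: "'y set" and Rg :: "'y \<Rightarrow> 'v set" and Sup :: "'x \<Rightarrow> 'y set"
  assumes finX: "finite X" and finD: "\<forall>x\<in>X. finite (Dom x)" and QX: "Q \<subseteq> X"
    and Bpos: "\<forall>x. B x \<ge> 1" and vY: "v \<in> PiE Y Rg" and z: "z \<in> PiE Y Rg"
    and dom: "\<forall>x\<in>Q. \<forall>v\<in>PiE Y Rg. restrict v (Sup x) \<in> Dom x"
  shows "real (card {c \<in> hash_space X Dom B. \<forall>x\<in>Q. c x (restrict v (Sup x)) = c x (restrict z (Sup x))})
    = real (card (hash_space X Dom B)) / real (\<Prod>x\<in>{x\<in>Q. Sup x \<inter> {y\<in>Y. v y \<noteq> z y} \<noteq> {}}. B x)"
proof -
  let ?CS = "hash_space X Dom B"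
  let ?eq = "\<lambda>c x. c x (restrict v (Sup x)) = c x (restrict z (Sup x))"
  let ?K = "{x\<in>Q. Sup x \<inter> {y\<in>Y. v y \<noteq> z y} \<noteq> {}}"
  have "restrict v (Sup x) = restrict z (Sup x)" if "x \<in> Q" "Sup x \<inter> {y\<in>Y. v y \<noteq> z y} = {}" for x
  proof
    fix y show "restrict v (Sup x) y = restrict z (Sup x) y"
    proof (cases "y \<in> Y")
      case True then show ?thesis using that by auto
    next
      case False then show ?thesis using vY z by (auto simp: PiE_iff extensional_def)
    qed
  qed
  then have agree_K: "{c \<in> ?CS. \<forall>x\<in>Q. ?eq c x} = {c \<in> ?CS. \<forall>x\<in>?K. ?eq c x}" by auto
  have ne: "restrict v (Sup x) \<noteq> restrict z (Sup x)" if xK: "x \<in> ?K" for x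
  proof -
    obtain y where "y \<in> Sup x" "y \<in> Y" "v y \<noteq> z y" using xK by blast
    then have "restrict v (Sup x) y \<noteq> restrict z (Sup x) y" by simp
    then show ?thesis by metis
  qed
  have mc: "card {c \<in> ?CS. \<forall>x\<in>?K. ?eq c x} * (\<Prod>x\<in>?K. B x) = card ?CS"
    by (rule card_hash_space_collisions_mult[OF finX finD]) (use QX dom vY z ne in auto)
  have pos: "(\<Prod>x\<in>?K. B x) > 0" using Bpos by (simp add: prod_pos less_le_trans[OF zero_less_one])
  show ?thesis unfolding agree_K using real_eq_divide_of_mult_eq[OF mc pos] by simp
qed

lemma sum_PiE_by_difference_le:
  fixes g :: "'y set \<Rightarrow> real"
  assumes finY: "finite Y" and finR: "\<forall>y\<in>Y. finite (Rg y)" and z: "z \<in> PiE Y Rg" and FY: "F \<subseteq> Y"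
    and g: "\<forall>T. 0 \<le> g T"
  shows "(\<Sum>v\<in>{v\<in>PiE Y Rg. \<forall>y\<in>Y-F. v y = z y} - {z}. g {y\<in>Y. v y \<noteq> z y})
    \<le> (\<Sum>T\<in>{T. T \<subseteq> F \<and> T \<noteq> {}}. real (\<Prod>y\<in>T. card (Rg y)) * g T)"
proof -
  let ?V = "{v\<in>PiE Y Rg. (\<forall>y\<in>Y-F. v y = z y)} - {z}"
  let ?Tv = "\<lambda>v. {y\<in>Y. v y \<noteq> z y}"
  let ?TT = "{T. T \<subseteq> F \<and> T \<noteq> {}}"
  have finV: "finite ?V" using finY finR by (auto intro: finite_subset[OF _ finite_PiE[of Y Rg]])
  have finTT: "finite ?TT" using finite_subset[OF FY finY] by (auto intro: finite_subset[of _ "Pow F"])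
  have "(\<Sum>v\<in>?V. g (?Tv v)) = (\<Sum>T\<in>?TT. \<Sum>v\<in>{v\<in>?V. ?Tv v = T}. g (?Tv v))"
  proof (rule sum.group[symmetric, OF finV finTT])
    show "?Tv ` ?V \<subseteq> ?TT"
    proof
      fix T assume "T \<in> ?Tv ` ?V"
      then obtain v where v: "v \<in> ?V" "T = ?Tv v" by auto
      have "T \<subseteq> F" using v by auto
      moreover have "T \<noteq> {}"
      proof
        assume "T = {}"
        then have "\<forall>y\<in>Y. v y = z y" using v by auto
        then have "v = z" using v(1) z by (auto simp: PiE_iff extensional_def fun_eq_iff)
        then show False using v by auto
      qed
      ultimately show "T \<in> ?TT" by auto
    qed
  qed
  also have "\<dots> \<le> (\<Sum>T\<in>?TT. real (\<Prod>y\<in>T. card (Rg y)) * g T)"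
  proof (rule sum_mono)
    fix T assume T: "T \<in> ?TT"
    have "T \<subseteq> Y" using T FY by auto
    then have finT: "finite T" using finY by (rule finite_subset)
    have "card {v\<in>?V. ?Tv v = T} \<le> card {v \<in> PiE Y Rg. ?Tv v = T}"
      using finY finR by (intro card_mono) (auto intro: finite_subset[OF _ finite_PiE[of Y Rg]])
    also have "\<dots> \<le> (\<Prod>y\<in>T. card (Rg y))"
      using \<open>T \<subseteq> Y\<close> finR finT by (intro card_PiE_differ_on_le) auto
    finally have "real (card {v\<in>?V. ?Tv v = T}) \<le> real (\<Prod>y\<in>T. card (Rg y))"
      by (simp only: of_nat_le_iff)
    then have "real (card {v\<in>?V. ?Tv v = T}) * g T \<le> real (\<Prod>y\<in>T. card (Rg y)) * g T"
      by (rule mult_right_mono) (use g in simp)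
    then show "(\<Sum>v\<in>{v\<in>?V. ?Tv v = T}. g (?Tv v)) \<le> real (\<Prod>y\<in>T. card (Rg y)) * g T"
      by simp
  qed
  finally show ?thesis .
qed

text \<open>A tuple v that differs from z exactly on T survives a uniformly random hash function
with probability \<open>1 / (\<Prod>x. B x)\<close>, the product ranging over the hashes that see T.\<close>

lemma sum_card_confusable_le:
  fixes X :: "'x set" and Dom :: "'x \<Rightarrow> ('y \<Rightarrow> 'v) set" and B :: "'x \<Rightarrow> nat"
    and Y :: "'y set" and Rg :: "'y \<Rightarrow> 'v set" and Sup :: "'x \<Rightarrow> 'y set"
  assumes finX: "finite X" and finD: "\<forall>x\<in>X. finite (Dom x)" and QX: "Q \<subseteq> X"
    and Bpos: "\<forall>x. B x \<ge> 1" and finY: "finite Y" and finR: "\<forall>y\<in>Y. finite (Rg y)"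
    and z: "z \<in> PiE Y Rg" and FY: "F \<subseteq> Y"
    and dom: "\<forall>x\<in>Q. \<forall>v\<in>PiE Y Rg. restrict v (Sup x) \<in> Dom x"
  shows "(\<Sum>c\<in>hash_space X Dom B. real (card ({v\<in>PiE Y Rg. (\<forall>y\<in>Y-F. v y = z y) \<and>
            (\<forall>x\<in>Q. c x (restrict v (Sup x)) = c x (restrict z (Sup x)))} - {z})))
     \<le> real (card (hash_space X Dom B)) *
        (\<Sum>T\<in>{T. T \<subseteq> F \<and> T \<noteq> {}}.
           real (\<Prod>y\<in>T. card (Rg y)) / real (\<Prod>x\<in>{x\<in>Q. Sup x \<inter> T \<noteq> {}}. B x))"
proof -
  let ?CS = "hash_space X Dom B"
  let ?V = "{v\<in>PiE Y Rg. (\<forall>y\<in>Y-F. v y = z y)} - {z}"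
  let ?eq = "\<lambda>c v x. c x (restrict v (Sup x)) = c x (restrict z (Sup x))"
  let ?g = "\<lambda>T. 1 / real (\<Prod>x\<in>{x\<in>Q. Sup x \<inter> T \<noteq> {}}. B x)"
  have finCS: "finite ?CS" unfolding hash_space_def using finX finD by (auto intro!: finite_PiE)
  have finV: "finite ?V" using finY finR by (auto intro: finite_subset[OF _ finite_PiE[of Y Rg]])
  have set_eq: "{v\<in>PiE Y Rg. (\<forall>y\<in>Y-F. v y = z y) \<and> (\<forall>x\<in>Q. ?eq c v x)} - {z}
      = {v\<in>?V. \<forall>x\<in>Q. ?eq c v x}" for c
    by auto
  have "(\<Sum>c\<in>?CS. real (card {v\<in>?V. \<forall>x\<in>Q. ?eq c v x}))
      = (\<Sum>c\<in>?CS. \<Sum>v\<in>?V. if (\<forall>x\<in>Q. ?eq c v x) then 1 else 0)"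
    using finV by (simp add: sum.If_cases Int_def)
  also have "\<dots> = (\<Sum>v\<in>?V. \<Sum>c\<in>?CS. if (\<forall>x\<in>Q. ?eq c v x) then 1 else 0)" by (rule sum.swap)
  also have "\<dots> = (\<Sum>v\<in>?V. real (card ?CS) * ?g {y\<in>Y. v y \<noteq> z y})"
  proof (rule sum.cong[OF refl])
    fix v assume "v \<in> ?V"
    then have "v \<in> PiE Y Rg" by auto
    then show "(\<Sum>c\<in>?CS. if (\<forall>x\<in>Q. ?eq c v x) then 1 else 0) = real (card ?CS) * ?g {y\<in>Y. v y \<noteq> z y}"
      using card_hash_space_agree[OF finX finD QX Bpos _ z dom] finCS by (simp add: sum.If_cases Int_def)
  qed
  also have "\<dots> = real (card ?CS) * (\<Sum>v\<in>?V. ?g {y\<in>Y. v y \<noteq> z y})" by (simp add: sum_distrib_left)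
  also have "\<dots> \<le> real (card ?CS) * (\<Sum>T\<in>{T. T \<subseteq> F \<and> T \<noteq> {}}. real (\<Prod>y\<in>T. card (Rg y)) * ?g T)"
    by (rule mult_left_mono[OF sum_PiE_by_difference_le[OF finY finR z FY]]) (simp_all add: prod_nonneg)
  finally show ?thesis unfolding set_eq by simp
qed

lemma prod_pow2_ceil_le:
  assumes "\<forall>t\<in>T. 0 \<le> x t"
  shows "real (\<Prod>t\<in>T. (2::nat) ^ nat \<lceil>x t\<rceil>) \<le> 2 powr (\<Sum>t\<in>T. x t + 1)"
proof -
  have "real (\<Prod>t\<in>T. (2::nat) ^ nat \<lceil>x t\<rceil>) = (\<Prod>t\<in>T. 2 powr real (nat \<lceil>x t\<rceil>))"
    by (simp add: powr_realpow)
  also have "\<dots> \<le> (\<Prod>t\<in>T. 2 powr (x t + 1))"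
  proof (rule prod_mono)
    fix t assume "t \<in> T"
    then have "0 \<le> x t" using assms by blast
    then have "real (nat \<lceil>x t\<rceil>) \<le> x t + 1" by linarith
    then show "0 \<le> 2 powr real (nat \<lceil>x t\<rceil>) \<and> 2 powr real (nat \<lceil>x t\<rceil>) \<le> 2 powr (x t + 1)"
      by simp
  qed
  also have "\<dots> = 2 powr (\<Sum>t\<in>T. x t + 1)" by (simp add: powr_sum)
  finally show ?thesis .
qed

lemma prod_pow2_floor_ge: "2 powr (\<Sum>t\<in>T. x t - 1) \<le> real (\<Prod>t\<in>T. (2::nat) ^ nat \<lfloor>x t\<rfloor>)"
proof -
  have "2 powr (\<Sum>t\<in>T. x t - 1) = (\<Prod>t\<in>T. 2 powr (x t - 1))" by (simp add: powr_sum)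
  also have "\<dots> \<le> (\<Prod>t\<in>T. 2 powr real (nat \<lfloor>x t\<rfloor>))"
  proof (rule prod_mono)
    fix t
    have "x t - 1 \<le> real (nat \<lfloor>x t\<rfloor>)" by linarith
    then show "0 \<le> 2 powr (x t - 1) \<and> 2 powr (x t - 1) \<le> 2 powr real (nat \<lfloor>x t\<rfloor>)"
      by simp
  qed
  also have "\<dots> = real (\<Prod>t\<in>T. (2::nat) ^ nat \<lfloor>x t\<rfloor>)"
    by (simp add: powr_realpow)
  finally show ?thesis .
qed

lemma tendsto_zero_powr_bound:
  fixes f :: "nat \<Rightarrow> real"
  assumes "\<forall>n. 0 \<le> f n" "\<forall>n. f n \<le> 2 powr (real n * a + c)" "a < 0"
  shows "f \<longlonglongrightarrow> 0"
proof (rule tendsto_sandwich[of "\<lambda>_. 0" f sequentially "\<lambda>n. 2 powr c * (2 powr a) ^ n"])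
  show "\<forall>\<^sub>F n in sequentially. 0 \<le> f n" using assms(1) by simp
  have "2 powr (real n * a + c) = 2 powr c * (2 powr a) ^ n" for n
    by (simp add: powr_add powr_realpow[symmetric] powr_powr mult.commute)
  then show "\<forall>\<^sub>F n in sequentially. f n \<le> 2 powr c * (2 powr a) ^ n" using assms(2) by simp
  have "norm (2 powr a) < 1" using powr_less_one[of 2 a] assms(3) by simp
  then have "(\<lambda>n. (2 powr a) ^ n) \<longlonglongrightarrow> 0" by (rule LIMSEQ_power_zero)
  then show "(\<lambda>n. 2 powr c * (2 powr a) ^ n) \<longlonglongrightarrow> 0" using tendsto_mult_right_zero by blast
qed simp

lemma pow2_ratio_tendsto_zero:
  fixes a :: "'x \<Rightarrow> real" and b :: "'y \<Rightarrow> real" and N :: "nat \<Rightarrow> 'x \<Rightarrow> nat"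
  assumes a_nonneg: "\<forall>x\<in>X. 0 \<le> a x" and less: "(\<Sum>x\<in>X. a x) < (\<Sum>y\<in>Y. b y)"
    and N_le: "\<forall>n. \<forall>x\<in>X. N n x \<le> 2 ^ nat \<lceil>real n * a x\<rceil>"
  shows "(\<lambda>n. real (\<Prod>x\<in>X. N n x) / real (\<Prod>y\<in>Y. (2::nat) ^ nat \<lfloor>real n * b y\<rfloor>)) \<longlonglongrightarrow> 0"
proof -
  let ?a = "(\<Sum>x\<in>X. a x) - (\<Sum>y\<in>Y. b y)" and ?c = "real (card X) + real (card Y)"
  have bound: "\<forall>n. real (\<Prod>x\<in>X. N n x) / real (\<Prod>y\<in>Y. (2::nat) ^ nat \<lfloor>real n * b y\<rfloor>)
      \<le> 2 powr (real n * ?a + ?c)"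
  proof
    fix n
    have "real (\<Prod>x\<in>X. N n x) \<le> real (\<Prod>x\<in>X. (2::nat) ^ nat \<lceil>real n * a x\<rceil>)"
      using N_le by (simp only: of_nat_le_iff) (intro prod_mono, auto)
    also have "\<dots> \<le> 2 powr (\<Sum>x\<in>X. real n * a x + 1)"
      using a_nonneg by (intro prod_pow2_ceil_le) auto
    finally have num: "real (\<Prod>x\<in>X. N n x) \<le> 2 powr (\<Sum>x\<in>X. real n * a x + 1)" .
    have den: "2 powr (\<Sum>y\<in>Y. real n * b y - 1) \<le> real (\<Prod>y\<in>Y. (2::nat) ^ nat \<lfloor>real n * b y\<rfloor>)"
      by (rule prod_pow2_floor_ge)
    have "real (\<Prod>x\<in>X. N n x) / real (\<Prod>y\<in>Y. (2::nat) ^ nat \<lfloor>real n * b y\<rfloor>)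
        \<le> 2 powr (\<Sum>x\<in>X. real n * a x + 1) / 2 powr (\<Sum>y\<in>Y. real n * b y - 1)"
      using num den by (intro frac_le) auto
    also have "\<dots> = 2 powr (real n * ?a + ?c)"
      by (simp add: powr_diff [symmetric] sum.distrib sum_subtractf sum_distrib_left[symmetric] algebra_simps)
    finally show "real (\<Prod>x\<in>X. N n x) / real (\<Prod>y\<in>Y. (2::nat) ^ nat \<lfloor>real n * b y\<rfloor>)
        \<le> 2 powr (real n * ?a + ?c)" .
  qed
  show ?thesis
    by (rule tendsto_zero_powr_bound[OF _ bound]) (use less in \<open>auto intro!: divide_nonneg_nonneg prod_nonneg\<close>)
qed

definition region_witness ::
  "('k \<Rightarrow> 'm set) \<Rightarrow> ('m \<Rightarrow> 'm set) \<Rightarrow> 'k set \<Rightarrow> ('k \<Rightarrow> real) \<Rightarrow> ('m \<Rightarrow> 'm set)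
   \<Rightarrow> real ^ 'm \<Rightarrow> ('m set \<Rightarrow> real) \<Rightarrow> bool" where
  "region_witness S A P CP D r \<gamma> \<longleftrightarrow>
     (\<forall>j. r $ j \<ge> 0) \<and> (\<forall>j. j \<notin> SP S P \<longrightarrow> r $ j = 0) \<and> decoding_choice S A P D \<and>
     (\<forall>J \<in> Iset S P. \<gamma> J \<ge> 0) \<and> (\<forall>J. J \<notin> Iset S P \<longrightarrow> \<gamma> J = 0) \<and>
     (\<forall>j \<in> SP S P. \<forall>T. T \<noteq> {} \<and> T \<subseteq> D j \<longrightarrow>
        (\<Sum>i\<in>T. r $ i) < (\<Sum>J1 \<in> {J. J \<subseteq> D j \<union> (A j \<inter> SP S P) \<and> J \<inter> T \<noteq> {}}. \<gamma> J1)) \<and>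
     (\<forall>j \<in> SP S P. \<forall>K. K \<noteq> {} \<and> K \<subseteq> P \<longrightarrow>
        (\<Sum>J2 \<in> {J \<in> Iset S K. J \<notin> Iset S (P - K) \<and> \<not> J \<subseteq> A j \<inter> SP S P}. \<gamma> J2)
        < (\<Sum>k\<in>K. CP k))"

lemma region_P_iff_witness:
  "r \<in> region_P S A P CP \<longleftrightarrow> (\<exists>D \<gamma>. region_witness S A P CP D r \<gamma>)"
  unfolding region_P_def region_D_def region_witness_def
  by (simp only: UN_iff mem_Collect_eq Bex_def) (intro iffI; elim exE conjE; intro exI conjI; assumption)

lemma region_witness_scaleR:
  assumes "region_witness S A P CP D r \<gamma>" and "u > 0"
  shows "region_witness S A P (\<lambda>k. u * CP k) D (u *\<^sub>R r) (\<lambda>J. u * \<gamma> J)"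
proof -
  have "(\<Sum>i\<in>T. (u *\<^sub>R r) $ i) = u * (\<Sum>i\<in>T. r $ i)"
    and "(\<Sum>J\<in>X. u * \<gamma> J) = u * (\<Sum>J\<in>X. \<gamma> J)"
    and "(\<Sum>k\<in>K. u * CP k) = u * (\<Sum>k\<in>K. CP k)" for T X K
    by (simp_all add: sum_distrib_left)
  with assms show ?thesis
    unfolding region_witness_def by (simp add: zero_le_mult_iff mult_less_cancel_left_pos)
qed

lemma R_CLS_part_eq_sum:
  fixes S :: "'k::finite \<Rightarrow> 'm::finite set"
  assumes "R \<in> R_CLS_part S A Pis CPi"
  obtains r where "\<forall>P\<in>Pis. r P \<in> region_P S A P (CPi P)" and "R = (\<Sum>P\<in>Pis. r P)"
proof -
  obtain r where r: "\<forall>P\<in>Pis. r P \<in> region_P S A P (CPi P)"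
    and R: "\<forall>j. R $ j = (\<Sum>P \<in> {P \<in> Pis. j \<in> SP S P}. r P $ j)"
    using assms unfolding R_CLS_part_def by blast
  have zero: "r P $ j = 0" if P: "P \<in> Pis" and j: "j \<notin> SP S P" for P j
  proof -
    obtain D \<gamma> where "region_witness S A P (CPi P) D (r P) \<gamma>"
      using r P region_P_iff_witness by blast
    then show ?thesis using j unfolding region_witness_def by simp
  qed
  have "R $ j = (\<Sum>P\<in>Pis. r P $ j)" for j
    unfolding R[rule_format] using zero by (intro sum.mono_neutral_left) auto
  then have "R = (\<Sum>P\<in>Pis. r P)" by (simp add: vec_eq_iff)
  with r show ?thesis by (rule that)
qed

definition mask :: "'m set \<Rightarrow> ('m \<Rightarrow> nat) \<Rightarrow> 'm \<Rightarrow> nat" where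
  "mask M m = (\<lambda>t. if t \<in> M then m t else 1)"

text \<open>Piece \<open>i \<in> I\<close> is served by the senders in \<open>senders i\<close>, which devote the link rates
\<open>link_rate i\<close> to it; its sub-message and composite rates are \<open>rate i\<close> and \<open>comp_rate i\<close>.\<close>

locale composite_coding =
  fixes S :: "'k::finite \<Rightarrow> 'm::finite set" and A :: "'m \<Rightarrow> 'm set" and C :: "'k \<Rightarrow> real"
    and I :: "'i set" and senders :: "'i \<Rightarrow> 'k set" and link_rate :: "'i \<Rightarrow> 'k \<Rightarrow> real"
    and decode_set :: "'i \<Rightarrow> 'm \<Rightarrow> 'm set" and rate :: "'i \<Rightarrow> real ^ 'm"
    and comp_rate :: "'i \<Rightarrow> 'm set \<Rightarrow> real"
  assumes finite_pieces: "finite I"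
    and witness: "\<forall>i\<in>I. region_witness S A (senders i) (link_rate i) (decode_set i) (rate i) (comp_rate i)"
    and link_rate_pos: "\<forall>i\<in>I. \<forall>k\<in>senders i. link_rate i k > 0"
    and link_capacity: "\<forall>k. (\<Sum>i\<in>{i\<in>I. k \<in> senders i}. link_rate i k) \<le> C k"
begin

definition "total_rate = (\<Sum>i\<in>I. rate i)"
definition "composites i = Iset S (senders i)"
definition "known_composites i k = {J \<in> composites i. J \<subseteq> S k}"
definition "sub_size n i t = (2::nat) ^ nat \<lceil>real n * rate i $ t\<rceil>"
definition "comp_size n i J = (2::nat) ^ nat \<lfloor>real n * comp_rate i J\<rfloor>"
definition "link_size n i k = (2::nat) ^ nat \<lfloor>real n * link_rate i k\<rfloor>"
definition "comp_hashes n = hash_space (Sigma I composites)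
   (\<lambda>(i,J). PiE J (\<lambda>t. {1..sub_size n i t})) (\<lambda>(i,J). comp_size n i J)"
definition "link_hashes n = hash_space (Sigma I senders)
   (\<lambda>(i,k). PiE (known_composites i k) (\<lambda>J. {1..comp_size n i J})) (\<lambda>(i,k). link_size n i k)"
definition "msg_size n t = (2::nat) ^ nat \<lfloor>real n * total_rate $ t\<rfloor>"
definition "sub_tuples n t = PiE I (\<lambda>i. {1..sub_size n i t})"
definition "split_msg n t =
   (SOME s. inj_on s {1..msg_size n t} \<and> s ` {1..msg_size n t} \<subseteq> sub_tuples n t)"
definition "sub_msgs n m i t = split_msg n t (m t) i"
definition "comp_msgs WF uu i = (\<lambda>J\<in>composites i. WF (i,J) (restrict (uu i) J))"
definition "link_msg WF HF uu i k = HF (i,k) (restrict (comp_msgs WF uu i) (known_composites i k))"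
definition "pieces_of k = {i\<in>I. k \<in> senders i}"
definition "link_tuples n k = PiE (pieces_of k) (\<lambda>i. {1..link_size n i k})"
definition "link_index n k = (SOME e. bij_betw e (link_tuples n k) {1..card (link_tuples n k)})"
definition "encoder n WF HF k m =
   link_index n k (\<lambda>i\<in>pieces_of k. link_msg WF HF (sub_msgs n (mask (S k) m)) i k)"
definition "comp_candidates n WF HF i j uu Lk = {w \<in> PiE (composites i) (\<lambda>J. {1..comp_size n i J}).
   (\<forall>J\<in>composites i. J \<subseteq> A j \<longrightarrow> w J = WF (i,J) (restrict uu J)) \<and>
   (\<forall>k\<in>senders i. HF (i,k) (restrict w (known_composites i k)) = Lk k)}"
definition "sub_candidates n WF i j uu w =
   {v \<in> PiE (decode_set i j \<union> (A j \<inter> SP S (senders i))) (\<lambda>t. {1..sub_size n i t}).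
     (\<forall>t\<in>A j \<inter> SP S (senders i). v t = uu t) \<and>
     (\<forall>J\<in>composites i. J \<subseteq> decode_set i j \<union> A j \<longrightarrow> WF (i,J) (restrict v J) = w J)}"
definition "decode_piece n WF HF i j uu Lk =
   (let w = (SOME w. w \<in> comp_candidates n WF HF i j uu Lk)
    in (SOME v. v \<in> sub_candidates n WF i j uu w) j)"
definition "decoder n WF HF j L m =
   (let uu = sub_msgs n (mask (A j) m);
        Lp = (\<lambda>i k. inv_into (link_tuples n k) (link_index n k) (L k) i);
        d = (\<lambda>i\<in>I. if j \<in> SP S (senders i) then decode_piece n WF HF i j (uu i) (Lp i) else 1)
    in inv_into {1..msg_size n j} (split_msg n j) d)"

lemma piece_witness:
  "i \<in> I \<Longrightarrow> region_witness S A (senders i) (link_rate i) (decode_set i) (rate i) (comp_rate i)"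
  using witness by blast

lemma rate_nonneg: "i \<in> I \<Longrightarrow> 0 \<le> rate i $ t"
  using piece_witness unfolding region_witness_def by simp

lemma rate_outside: "i \<in> I \<Longrightarrow> t \<notin> SP S (senders i) \<Longrightarrow> rate i $ t = 0"
  using piece_witness unfolding region_witness_def by simp

lemma comp_rate_nonneg: "i \<in> I \<Longrightarrow> J \<in> composites i \<Longrightarrow> 0 \<le> comp_rate i J"
  using piece_witness unfolding region_witness_def composites_def by simp

lemma comp_rate_outside: "i \<in> I \<Longrightarrow> J \<notin> composites i \<Longrightarrow> comp_rate i J = 0"
  using piece_witness unfolding region_witness_def composites_def by simp

lemma decode_set_props:
  assumes "i \<in> I" "j \<in> SP S (senders i)"
  shows "j \<in> decode_set i j" "decode_set i j \<subseteq> SP S (senders i)" "decode_set i j \<inter> A j = {}"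
proof -
  have "decoding_choice S A (senders i) (decode_set i)"
    using piece_witness[OF assms(1)] unfolding region_witness_def by simp
  then show "j \<in> decode_set i j" "decode_set i j \<subseteq> SP S (senders i)" "decode_set i j \<inter> A j = {}"
    using assms(2) unfolding decoding_choice_def by auto
qed

lemma sub_rate_condition:
  assumes "i \<in> I" "j \<in> SP S (senders i)" "T \<noteq> {}" "T \<subseteq> decode_set i j"
  shows "(\<Sum>t\<in>T. rate i $ t) <
    (\<Sum>J \<in> {J. J \<subseteq> decode_set i j \<union> (A j \<inter> SP S (senders i)) \<and> J \<inter> T \<noteq> {}}. comp_rate i J)"
  using piece_witness[OF assms(1)] assms(2-) unfolding region_witness_def by simp

lemma comp_rate_condition:
  assumes "i \<in> I" "j \<in> SP S (senders i)" "K \<noteq> {}" "K \<subseteq> senders i"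
  shows "(\<Sum>J \<in> {J \<in> Iset S K. J \<notin> Iset S (senders i - K) \<and> \<not> J \<subseteq> A j \<inter> SP S (senders i)}.
      comp_rate i J) < (\<Sum>k\<in>K. link_rate i k)"
  using piece_witness[OF assms(1)] assms(2-) unfolding region_witness_def by simp

lemma composites_subset: "J \<in> composites i \<Longrightarrow> J \<subseteq> SP S (senders i)"
  unfolding composites_def Iset_def SP_def by auto

lemma msg_set_iff: "m \<in> msg_set n total_rate \<longleftrightarrow> (\<forall>t. m t \<in> {1..msg_size n t})"
  unfolding msg_set_def idx_set_def msg_size_def by simp

lemma comp_size_pos: "comp_size n i J \<ge> 1" unfolding comp_size_def by simp
lemma link_size_pos: "link_size n i k \<ge> 1" unfolding link_size_def by simp

text \<open>Splitting is possible because \<open>\<lfloor>n R\<^sub>t\<rfloor> \<le> \<Sum>\<^sub>i \<lceil>n r\<^sub>i\<^sub>t\<rceil>\<close>.\<close>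

lemma split_msg_exists: "\<exists>s. inj_on s {1..msg_size n t} \<and> s ` {1..msg_size n t} \<subseteq> sub_tuples n t"
proof -
  have "real n * total_rate $ t = (\<Sum>i\<in>I. real n * rate i $ t)"
    unfolding total_rate_def by (simp add: sum_distrib_left)
  also have "\<dots> \<le> (\<Sum>i\<in>I. real (nat \<lceil>real n * rate i $ t\<rceil>))"
    by (intro sum_mono) linarith
  finally have "real n * total_rate $ t \<le> real (\<Sum>i\<in>I. nat \<lceil>real n * rate i $ t\<rceil>)"
    by simp
  then have "nat \<lfloor>real n * total_rate $ t\<rfloor> \<le> (\<Sum>i\<in>I. nat \<lceil>real n * rate i $ t\<rceil>)"
    by linarith
  then have "msg_size n t \<le> (\<Prod>i\<in>I. sub_size n i t)"
    unfolding msg_size_def sub_size_def by (simp add: power_sum[symmetric])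
  then have "card {1..msg_size n t} \<le> card (sub_tuples n t)"
    unfolding sub_tuples_def using finite_pieces by (simp add: card_PiE)
  then show ?thesis using card_le_inj[of "{1..msg_size n t}" "sub_tuples n t"] finite_pieces
    unfolding sub_tuples_def by (auto simp: finite_PiE)
qed

lemma split_msg_props:
  "inj_on (split_msg n t) {1..msg_size n t}" "split_msg n t ` {1..msg_size n t} \<subseteq> sub_tuples n t"
  using someI_ex[OF split_msg_exists[of n t]] unfolding split_msg_def by auto

lemma sub_msgs_range:
  assumes "m t \<in> {1..msg_size n t}" "i \<in> I"
  shows "sub_msgs n m i t \<in> {1..sub_size n i t}"
proof -
  have "split_msg n t (m t) \<in> sub_tuples n t" using split_msg_props(2)[of n t] assms(1) by blast
  then show ?thesis using assms(2) unfolding sub_msgs_def sub_tuples_def by (auto simp: PiE_iff)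
qed

lemma sub_msgs_outside:
  assumes "m t \<in> {1..msg_size n t}" "i \<in> I" "t \<notin> SP S (senders i)"
  shows "sub_msgs n m i t = 1"
proof -
  have "sub_size n i t = 1" using rate_outside assms unfolding sub_size_def by simp
  then show ?thesis using sub_msgs_range[of m t n i] assms by simp
qed

lemma link_index_exists: "\<exists>e. bij_betw e (link_tuples n k) {1..card (link_tuples n k)}"
  by (rule finite_same_card_bij) (auto simp: link_tuples_def pieces_of_def finite_pieces finite_PiE)

lemma link_index_bij: "bij_betw (link_index n k) (link_tuples n k) {1..card (link_tuples n k)}"
  using someI_ex[OF link_index_exists] unfolding link_index_def by blast

lemma card_link_tuples_le: "card (link_tuples n k) \<le> 2 ^ nat \<lfloor>real n * C k\<rfloor>"
proof -
  have fin: "finite (pieces_of k)" using finite_pieces unfolding pieces_of_def by simp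
  have "real (\<Sum>i\<in>pieces_of k. nat \<lfloor>real n * link_rate i k\<rfloor>)
      = (\<Sum>i\<in>pieces_of k. real (nat \<lfloor>real n * link_rate i k\<rfloor>))" by simp
  also have "\<dots> \<le> (\<Sum>i\<in>pieces_of k. real n * link_rate i k)"
  proof (rule sum_mono)
    fix i assume "i \<in> pieces_of k"
    then have "link_rate i k > 0" using link_rate_pos unfolding pieces_of_def by auto
    then have "real n * link_rate i k \<ge> 0" by simp
    then show "real (nat \<lfloor>real n * link_rate i k\<rfloor>) \<le> real n * link_rate i k" by linarith
  qed
  also have "\<dots> = real n * (\<Sum>i\<in>pieces_of k. link_rate i k)" by (simp add: sum_distrib_left)
  also have "\<dots> \<le> real n * C k"
    using link_capacity unfolding pieces_of_def by (intro mult_left_mono) auto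
  finally have "(\<Sum>i\<in>pieces_of k. nat \<lfloor>real n * link_rate i k\<rfloor>) \<le> nat \<lfloor>real n * C k\<rfloor>"
    by linarith
  then have "(2::nat) ^ (\<Sum>i\<in>pieces_of k. nat \<lfloor>real n * link_rate i k\<rfloor>) \<le> 2 ^ nat \<lfloor>real n * C k\<rfloor>"
    by (intro power_increasing) auto
  moreover have "card (link_tuples n k) = 2 ^ (\<Sum>i\<in>pieces_of k. nat \<lfloor>real n * link_rate i k\<rfloor>)"
    unfolding link_tuples_def using fin by (simp add: card_PiE link_size_def power_sum)
  ultimately show ?thesis by simp
qed

definition "valid_subs n uu \<longleftrightarrow> (\<forall>i\<in>I. \<forall>t. uu i t \<in> {1..sub_size n i t})"

lemma valid_sub_msgs: "m \<in> msg_set n total_rate \<Longrightarrow> valid_subs n (sub_msgs n m)"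
  unfolding valid_subs_def msg_set_iff using sub_msgs_range by blast

lemma mask_in_msg_set: "m \<in> msg_set n total_rate \<Longrightarrow> mask M m \<in> msg_set n total_rate"
  unfolding msg_set_iff mask_def by (auto simp: msg_size_def)

lemma comp_hash_range:
  assumes "WF \<in> comp_hashes n" "i \<in> I" "J \<in> composites i" "x \<in> PiE J (\<lambda>t. {1..sub_size n i t})"
  shows "WF (i,J) x \<in> {1..comp_size n i J}"
  using assms unfolding comp_hashes_def hash_space_def by (auto simp: PiE_iff)

lemma link_hash_range:
  assumes "HF \<in> link_hashes n" "i \<in> I" "k \<in> senders i"
    and "y \<in> PiE (known_composites i k) (\<lambda>J. {1..comp_size n i J})"
  shows "HF (i,k) y \<in> {1..link_size n i k}"
  using assms unfolding link_hashes_def hash_space_def by (auto simp: PiE_iff)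

lemma restrict_valid_subs:
  "valid_subs n uu \<Longrightarrow> i \<in> I \<Longrightarrow> restrict (uu i) J \<in> PiE J (\<lambda>t. {1..sub_size n i t})"
  unfolding valid_subs_def by auto

lemma comp_msgs_in:
  assumes "WF \<in> comp_hashes n" "valid_subs n uu" "i \<in> I"
  shows "comp_msgs WF uu i \<in> PiE (composites i) (\<lambda>J. {1..comp_size n i J})"
  using comp_hash_range[OF assms(1,3) _ restrict_valid_subs[OF assms(2,3)]]
  unfolding comp_msgs_def by auto

lemma link_msg_range:
  assumes "WF \<in> comp_hashes n" "HF \<in> link_hashes n" "valid_subs n uu" "i \<in> I" "k \<in> senders i"
  shows "link_msg WF HF uu i k \<in> {1..link_size n i k}"
proof -
  have "restrict (comp_msgs WF uu i) (known_composites i k)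
      \<in> PiE (known_composites i k) (\<lambda>J. {1..comp_size n i J})"
    using comp_msgs_in[OF assms(1,3,4)] unfolding known_composites_def by (auto simp: PiE_iff)
  then show ?thesis
    unfolding link_msg_def using link_hash_range[OF assms(2,4,5)] by blast
qed

lemma link_msg_tuple_in:
  assumes "WF \<in> comp_hashes n" "HF \<in> link_hashes n" "valid_subs n uu"
  shows "(\<lambda>i\<in>pieces_of k. link_msg WF HF uu i k) \<in> link_tuples n k"
  unfolding link_tuples_def using link_msg_range[OF assms] by (auto simp: pieces_of_def)

lemma is_code_encoder_decoder:
  assumes "WF \<in> comp_hashes n" "HF \<in> link_hashes n"
  shows "is_code S A C n total_rate (\<lambda>k m. encoder n WF HF k m) (\<lambda>j L m. decoder n WF HF j L m)"
  unfolding is_code_def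
proof (intro conjI allI ballI impI)
  fix k m assume m: "m \<in> msg_set n total_rate"
  have "(\<lambda>i\<in>pieces_of k. link_msg WF HF (sub_msgs n (mask (S k) m)) i k) \<in> link_tuples n k"
    by (rule link_msg_tuple_in[OF assms valid_sub_msgs[OF mask_in_msg_set[OF m]]])
  then have "encoder n WF HF k m \<in> {1..card (link_tuples n k)}"
    unfolding encoder_def using link_index_bij[of n k] by (auto simp: bij_betw_def)
  then show "encoder n WF HF k m \<in> idx_set (real n * C k)"
    using card_link_tuples_le[of n k] unfolding idx_set_def by auto
next
  fix k and m m' :: "'m \<Rightarrow> nat" assume "\<forall>i\<in>S k. m i = m' i"
  then have "mask (S k) m = mask (S k) m'" unfolding mask_def by auto
  then show "encoder n WF HF k m = encoder n WF HF k m'" unfolding encoder_def by simp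
next
  fix j L and m m' :: "'m \<Rightarrow> nat" assume "\<forall>i\<in>A j. m i = m' i"
  then have "mask (A j) m = mask (A j) m'" unfolding mask_def by auto
  then show "decoder n WF HF j L m = decoder n WF HF j L m'" unfolding decoder_def by simp
qed

definition "comp_confusion n WF HF m i j \<longleftrightarrow>
  (\<exists>w \<in> comp_candidates n WF HF i j (sub_msgs n m i) (link_msg WF HF (sub_msgs n m) i).
     w \<noteq> comp_msgs WF (sub_msgs n m) i)"
definition "sub_confusion n WF m i j \<longleftrightarrow>
  (\<exists>v \<in> sub_candidates n WF i j (sub_msgs n m i) (comp_msgs WF (sub_msgs n m) i).
      v \<noteq> restrict (sub_msgs n m i) (decode_set i j \<union> (A j \<inter> SP S (senders i))))"

lemma sub_msgs_mask: "t \<in> M \<Longrightarrow> sub_msgs n (mask M m) i t = sub_msgs n m i t"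
  unfolding sub_msgs_def mask_def by simp

lemma restrict_sub_msgs_mask:
  "J \<subseteq> M \<Longrightarrow> restrict (sub_msgs n (mask M m) i) J = restrict (sub_msgs n m i) J"
  using sub_msgs_mask[of _ M n m i] by (auto simp: restrict_def fun_eq_iff)

lemma link_msg_mask:
  "link_msg WF HF (sub_msgs n (mask (S k) m)) i k = link_msg WF HF (sub_msgs n m) i k"
proof -
  have "restrict (comp_msgs WF (sub_msgs n (mask (S k) m)) i) (known_composites i k)
      = restrict (comp_msgs WF (sub_msgs n m) i) (known_composites i k)"
    unfolding comp_msgs_def known_composites_def using restrict_sub_msgs_mask[of _ "S k" n m i]
    by (auto simp: restrict_def fun_eq_iff)
  then show ?thesis unfolding link_msg_def by simp
qed

lemma link_index_inverse:
  assumes "WF \<in> comp_hashes n" "HF \<in> link_hashes n" "m \<in> msg_set n total_rate" "i \<in> I" "k \<in> senders i"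
  shows "inv_into (link_tuples n k) (link_index n k) (encoder n WF HF k m) i
    = link_msg WF HF (sub_msgs n m) i k"
proof -
  let ?x = "(\<lambda>i\<in>pieces_of k. link_msg WF HF (sub_msgs n (mask (S k) m)) i k)"
  have x: "?x \<in> link_tuples n k"
    by (rule link_msg_tuple_in[OF assms(1,2) valid_sub_msgs[OF mask_in_msg_set[OF assms(3)]]])
  have "inj_on (link_index n k) (link_tuples n k)"
    using link_index_bij[of n k] by (simp add: bij_betw_def)
  then have "inv_into (link_tuples n k) (link_index n k) (encoder n WF HF k m) = ?x"
    unfolding encoder_def using x by simp
  then show ?thesis using assms(4,5) link_msg_mask by (simp add: pieces_of_def)
qed

lemma comp_candidates_cong:
  assumes "\<forall>t\<in>A j. uu t = uu' t" "\<forall>k\<in>senders i. Lk k = Lk' k"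
  shows "comp_candidates n WF HF i j uu Lk = comp_candidates n WF HF i j uu' Lk'"
proof -
  have "\<forall>J. J \<subseteq> A j \<longrightarrow> restrict uu J = restrict uu' J"
    using assms(1) by (auto simp: restrict_def fun_eq_iff)
  then show ?thesis unfolding comp_candidates_def using assms(2) by auto
qed

lemma sub_candidates_cong:
  assumes "\<forall>t\<in>A j. uu t = uu' t"
  shows "sub_candidates n WF i j uu w = sub_candidates n WF i j uu' w"
  unfolding sub_candidates_def using assms by auto

lemma comp_msgs_in_candidates:
  assumes "WF \<in> comp_hashes n" "m \<in> msg_set n total_rate" "i \<in> I"
  shows "comp_msgs WF (sub_msgs n m) i
    \<in> comp_candidates n WF HF i j (sub_msgs n m i) (link_msg WF HF (sub_msgs n m) i)"
  unfolding comp_candidates_def using comp_msgs_in[OF assms(1) valid_sub_msgs[OF assms(2)] assms(3)]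
  by (auto simp: comp_msgs_def link_msg_def)

lemma sub_msgs_in_candidates:
  assumes "m \<in> msg_set n total_rate" "i \<in> I"
  shows "restrict (sub_msgs n m i) (decode_set i j \<union> (A j \<inter> SP S (senders i)))
    \<in> sub_candidates n WF i j (sub_msgs n m i) (comp_msgs WF (sub_msgs n m) i)"
proof -
  have sub: "valid_subs n (sub_msgs n m)" by (rule valid_sub_msgs[OF assms(1)])
  have "restrict (restrict (sub_msgs n m i) (decode_set i j \<union> (A j \<inter> SP S (senders i)))) J
      = restrict (sub_msgs n m i) J"
    if "J \<in> composites i" "J \<subseteq> decode_set i j \<union> A j" for J
    using that composites_subset[OF that(1)] by (auto simp: restrict_def fun_eq_iff)
  then show ?thesis
    unfolding sub_candidates_def using sub assms(2) by (auto simp: valid_subs_def comp_msgs_def)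
qed

lemma decode_piece_correct:
  assumes WF: "WF \<in> comp_hashes n" and HF: "HF \<in> link_hashes n" and m: "m \<in> msg_set n total_rate"
    and i: "i \<in> I" and j: "j \<in> SP S (senders i)"
    and no_confusion: "\<not> comp_confusion n WF HF m i j \<and> \<not> sub_confusion n WF m i j"
  shows "decode_piece n WF HF i j (sub_msgs n (mask (A j) m) i)
      (\<lambda>k. inv_into (link_tuples n k) (link_index n k) (encoder n WF HF k m) i) = sub_msgs n m i j"
proof -
  let ?u = "sub_msgs n m" and ?u' = "sub_msgs n (mask (A j) m)"
  let ?Lp = "\<lambda>k. inv_into (link_tuples n k) (link_index n k) (encoder n WF HF k m) i"
  have side_info: "\<forall>t\<in>A j. ?u' i t = ?u i t" using sub_msgs_mask by blast
  have comp_eq: "comp_candidates n WF HF i j (?u' i) ?Lp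
      = comp_candidates n WF HF i j (?u i) (link_msg WF HF ?u i)"
    by (rule comp_candidates_cong) (use side_info link_index_inverse[OF WF HF m i] in auto)
  have "\<forall>w\<in>comp_candidates n WF HF i j (?u i) (link_msg WF HF ?u i). w = comp_msgs WF ?u i"
    using no_confusion unfolding comp_confusion_def by blast
  then have comp_decoded: "(SOME w. w \<in> comp_candidates n WF HF i j (?u' i) ?Lp) = comp_msgs WF ?u i"
    unfolding comp_eq using comp_msgs_in_candidates[OF WF m i] by (metis someI_ex)
  have sub_eq: "sub_candidates n WF i j (?u' i) (comp_msgs WF ?u i)
      = sub_candidates n WF i j (?u i) (comp_msgs WF ?u i)"
    by (rule sub_candidates_cong) (use side_info in auto)
  have "\<forall>v\<in>sub_candidates n WF i j (?u i) (comp_msgs WF ?u i).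
      v = restrict (?u i) (decode_set i j \<union> (A j \<inter> SP S (senders i)))"
    using no_confusion unfolding sub_confusion_def by blast
  then have sub_decoded: "(SOME v. v \<in> sub_candidates n WF i j (?u' i) (comp_msgs WF ?u i))
      = restrict (?u i) (decode_set i j \<union> (A j \<inter> SP S (senders i)))"
    unfolding sub_eq using sub_msgs_in_candidates[OF m i, of j WF] by (metis someI_ex)
  show ?thesis
    using decode_set_props(1)[OF i j] unfolding decode_piece_def Let_def comp_decoded sub_decoded by simp
qed

lemma decoder_correct:
  assumes WF: "WF \<in> comp_hashes n" and HF: "HF \<in> link_hashes n" and m: "m \<in> msg_set n total_rate"
    and no_confusion:
      "\<forall>i\<in>I. \<forall>j\<in>SP S (senders i). \<not> comp_confusion n WF HF m i j \<and> \<not> sub_confusion n WF m i j"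
  shows "decoder n WF HF j (\<lambda>k. encoder n WF HF k m) m = m j"
proof -
  let ?d = "\<lambda>i\<in>I. if j \<in> SP S (senders i)
      then decode_piece n WF HF i j (sub_msgs n (mask (A j) m) i)
             (\<lambda>k. inv_into (link_tuples n k) (link_index n k) (encoder n WF HF k m) i)
      else 1"
  have mj: "m j \<in> {1..msg_size n j}" using m by (simp add: msg_set_iff)
  have "?d i = split_msg n j (m j) i" for i
  proof (cases "i \<in> I \<and> j \<in> SP S (senders i)")
    case True
    then have "\<not> comp_confusion n WF HF m i j \<and> \<not> sub_confusion n WF m i j"
      using no_confusion by blast
    then have "?d i = sub_msgs n m i j"
      using True by (simp add: decode_piece_correct[OF WF HF m])
    then show ?thesis by (simp add: sub_msgs_def)
  next
    case False
    have "split_msg n j (m j) \<in> sub_tuples n j" using split_msg_props(2)[of n j] mj by blast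
    then show ?thesis
      using False sub_msgs_outside[where m = m and t = j, OF mj]
      unfolding sub_tuples_def sub_msgs_def by (auto simp: PiE_iff extensional_def)
  qed
  then have "?d = split_msg n j (m j)" by (rule ext)
  then have "decoder n WF HF j (\<lambda>k. encoder n WF HF k m) m
      = inv_into {1..msg_size n j} (split_msg n j) (split_msg n j (m j))"
    unfolding decoder_def Let_def by simp
  also have "\<dots> = m j" using split_msg_props(1)[of n j] mj by simp
  finally show ?thesis .
qed

definition "sub_confusion_bound n i j = (\<Sum>T\<in>{T. T \<subseteq> decode_set i j \<and> T \<noteq> {}}.
   real (\<Prod>t\<in>T. sub_size n i t) /
   real (\<Prod>J\<in>{J\<in>composites i. J \<subseteq> decode_set i j \<union> A j \<and> J \<inter> T \<noteq> {}}. comp_size n i J))"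
definition "comp_confusion_bound n i j = (\<Sum>E\<in>{E. E \<subseteq> {J\<in>composites i. \<not> J \<subseteq> A j} \<and> E \<noteq> {}}.
   real (\<Prod>J\<in>E. comp_size n i J) /
   real (\<Prod>k\<in>{k\<in>senders i. known_composites i k \<inter> E \<noteq> {}}. link_size n i k))"

lemma comp_hashes_finite_nonempty: "finite (comp_hashes n)" "comp_hashes n \<noteq> {}"
proof -
  have "finite (Sigma I composites)"
    and "\<forall>x\<in>Sigma I composites. finite (case x of (i, J) \<Rightarrow> PiE J (\<lambda>t. {1..sub_size n i t}))"
    and "\<forall>x. 1 \<le> (case x of (i, J) \<Rightarrow> comp_size n i J)"
    using finite_pieces comp_size_pos by (auto intro!: finite_PiE)
  then show "finite (comp_hashes n)" "comp_hashes n \<noteq> {}"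
    unfolding comp_hashes_def by (rule hash_space_finite_nonempty)+
qed

lemma link_hashes_finite_nonempty: "finite (link_hashes n)" "link_hashes n \<noteq> {}"
proof -
  have "finite (Sigma I senders)"
    and "\<forall>x\<in>Sigma I senders.
      finite (case x of (i, k) \<Rightarrow> PiE (known_composites i k) (\<lambda>J. {1..comp_size n i J}))"
    and "\<forall>x. 1 \<le> (case x of (i, k) \<Rightarrow> link_size n i k)"
    using finite_pieces link_size_pos by (auto intro!: finite_PiE simp: known_composites_def)
  then show "finite (link_hashes n)" "link_hashes n \<noteq> {}"
    unfolding link_hashes_def by (rule hash_space_finite_nonempty)+
qed

lemma sum_sub_confusions_le:
  assumes m: "m \<in> msg_set n total_rate" and i: "i \<in> I" and j: "j \<in> SP S (senders i)"
  shows "(\<Sum>WF\<in>comp_hashes n. real (card (sub_candidates n WF i j (sub_msgs n m i) (comp_msgs WF (sub_msgs n m) i)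
              - {restrict (sub_msgs n m i) (decode_set i j \<union> (A j \<inter> SP S (senders i)))})))
         \<le> real (card (comp_hashes n)) * sub_confusion_bound n i j"
proof -
  let ?u = "sub_msgs n m"
  let ?Y = "decode_set i j \<union> (A j \<inter> SP S (senders i))"
  let ?z = "restrict (?u i) ?Y"
  let ?JJ = "{J\<in>composites i. J \<subseteq> decode_set i j \<union> A j}"
  let ?Q = "Pair i ` ?JJ"
  let ?Rg = "\<lambda>t. {1..sub_size n i t}"
  let ?Dom = "\<lambda>(i,J). PiE J (\<lambda>t. {1..sub_size n i t})" and ?B = "\<lambda>(i,J). comp_size n i J"
  have sub: "valid_subs n ?u" by (rule valid_sub_msgs[OF m])
  have decode_set_bounds: "decode_set i j \<subseteq> SP S (senders i)" "decode_set i j \<inter> A j = {}"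
    using decode_set_props[OF i j] by auto
  have JY: "J \<subseteq> ?Y" if "J \<in> ?JJ" for J using that composites_subset[of J i] by auto
  have confusable_bound: "(\<Sum>c\<in>hash_space (Sigma I composites) ?Dom ?B.
       real (card ({v\<in>PiE ?Y ?Rg. (\<forall>y\<in>?Y - decode_set i j. v y = ?z y) \<and>
            (\<forall>x\<in>?Q. c x (restrict v (snd x)) = c x (restrict ?z (snd x)))} - {?z})))
     \<le> real (card (hash_space (Sigma I composites) ?Dom ?B)) *
        (\<Sum>T\<in>{T. T \<subseteq> decode_set i j \<and> T \<noteq> {}}.
           real (\<Prod>y\<in>T. card (?Rg y)) / real (\<Prod>x\<in>{x\<in>?Q. snd x \<inter> T \<noteq> {}}. ?B x))"
  proof (rule sum_card_confusable_le)
    show "finite (Sigma I composites)" using finite_pieces by auto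
    show "\<forall>x\<in>Sigma I composites. finite (?Dom x)" by (auto intro!: finite_PiE)
    show "?Q \<subseteq> Sigma I composites" using i by auto
    show "\<forall>x. 1 \<le> ?B x" using comp_size_pos by auto
    show "decode_set i j \<subseteq> ?Y" by auto
    show "\<forall>x\<in>?Q. \<forall>v\<in>PiE ?Y ?Rg. restrict v (snd x) \<in> ?Dom x"
    proof (intro ballI)
      fix x v assume x: "x \<in> ?Q" and v: "v \<in> PiE ?Y ?Rg"
      then obtain J where J: "J \<in> ?JJ" "x = (i,J)" by auto
      show "restrict v (snd x) \<in> ?Dom x" using JY[OF J(1)] v J(2) by (auto simp: PiE_iff)
    qed
    show "finite ?Y" by simp
    show "\<forall>y\<in>?Y. finite (?Rg y)" by simp
    show "?z \<in> PiE ?Y ?Rg" using sub i unfolding valid_subs_def by auto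
  qed
  have seteq: "{v\<in>PiE ?Y ?Rg. (\<forall>y\<in>?Y - decode_set i j. v y = ?z y) \<and>
            (\<forall>x\<in>?Q. c x (restrict v (snd x)) = c x (restrict ?z (snd x)))}
      = sub_candidates n c i j (?u i) (comp_msgs c ?u i)" for c
  proof -
    have a: "?Y - decode_set i j = A j \<inter> SP S (senders i)" using decode_set_bounds by auto
    have b: "restrict ?z J = restrict (?u i) J" if "J \<in> ?JJ" for J
      using JY[OF that] by (auto simp: restrict_def fun_eq_iff)
    have "(\<forall>x\<in>?Q. c x (restrict v (snd x)) = c x (restrict ?z (snd x))) \<longleftrightarrow>
          (\<forall>J\<in>composites i. J \<subseteq> decode_set i j \<union> A j \<longrightarrow> c (i,J) (restrict v J) = comp_msgs c ?u i J)" for v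
      using b unfolding comp_msgs_def by auto
    then show ?thesis unfolding sub_candidates_def a by auto
  qed
  have prodeq: "(\<Prod>x\<in>{x\<in>?Q. snd x \<inter> T \<noteq> {}}. ?B x)
      = (\<Prod>J\<in>{J\<in>composites i. J \<subseteq> decode_set i j \<union> A j \<and> J \<inter> T \<noteq> {}}. comp_size n i J)" for T
  proof -
    have "{x\<in>?Q. snd x \<inter> T \<noteq> {}} = Pair i ` {J\<in>composites i. J \<subseteq> decode_set i j \<union> A j \<and> J \<inter> T \<noteq> {}}"
      by (auto intro!: image_eqI)
    then show ?thesis by (simp add: prod.reindex inj_on_def)
  qed
  show ?thesis using confusable_bound unfolding seteq comp_hashes_def[symmetric] sub_confusion_bound_def prodeq by simp
qed

lemma sum_comp_confusions_le:
  assumes WF: "WF \<in> comp_hashes n" and m: "m \<in> msg_set n total_rate"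
    and i: "i \<in> I" and j: "j \<in> SP S (senders i)"
  shows "(\<Sum>HF\<in>link_hashes n. real (card (comp_candidates n WF HF i j (sub_msgs n m i)
            (link_msg WF HF (sub_msgs n m) i) - {comp_msgs WF (sub_msgs n m) i})))
         \<le> real (card (link_hashes n)) * comp_confusion_bound n i j"
proof -
  let ?u = "sub_msgs n m"
  let ?Y = "composites i"
  let ?z = "comp_msgs WF ?u i"
  let ?F = "{J\<in>composites i. \<not> J \<subseteq> A j}"
  let ?Q = "Pair i ` senders i"
  let ?Rg = "\<lambda>J. {1..comp_size n i J}"
  let ?Sup = "\<lambda>x. known_composites (fst x) (snd x)"
  let ?Dom = "\<lambda>(i,k). PiE (known_composites i k) (\<lambda>J. {1..comp_size n i J})"
    and ?B = "\<lambda>(i,k). link_size n i k"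
  have sub: "valid_subs n ?u" by (rule valid_sub_msgs[OF m])
  have confusable_bound: "(\<Sum>c\<in>hash_space (Sigma I senders) ?Dom ?B.
       real (card ({v\<in>PiE ?Y ?Rg. (\<forall>y\<in>?Y - ?F. v y = ?z y) \<and>
            (\<forall>x\<in>?Q. c x (restrict v (?Sup x)) = c x (restrict ?z (?Sup x)))} - {?z})))
     \<le> real (card (hash_space (Sigma I senders) ?Dom ?B)) *
        (\<Sum>T\<in>{T. T \<subseteq> ?F \<and> T \<noteq> {}}.
           real (\<Prod>y\<in>T. card (?Rg y)) / real (\<Prod>x\<in>{x\<in>?Q. ?Sup x \<inter> T \<noteq> {}}. ?B x))"
  proof (rule sum_card_confusable_le)
    show "finite (Sigma I senders)" using finite_pieces by auto
    show "\<forall>x\<in>Sigma I senders. finite (?Dom x)" by (auto intro!: finite_PiE simp: known_composites_def)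
    show "?Q \<subseteq> Sigma I senders" using i by auto
    show "\<forall>x. 1 \<le> ?B x" using link_size_pos by auto
    show "\<forall>x\<in>?Q. \<forall>v\<in>PiE ?Y ?Rg. restrict v (?Sup x) \<in> ?Dom x"
    proof (intro ballI)
      fix x v assume x: "x \<in> ?Q" and v: "v \<in> PiE ?Y ?Rg"
      then obtain k where k: "x = (i,k)" by auto
      show "restrict v (?Sup x) \<in> ?Dom x" using v k unfolding known_composites_def by (auto simp: PiE_iff)
    qed
    show "finite ?Y" by simp
    show "\<forall>y\<in>?Y. finite (?Rg y)" by simp
    show "?z \<in> PiE ?Y ?Rg" by (rule comp_msgs_in[OF WF sub i])
    show "?F \<subseteq> ?Y" by auto
  qed
  have seteq: "{v\<in>PiE ?Y ?Rg. (\<forall>y\<in>?Y - ?F. v y = ?z y) \<and>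
            (\<forall>x\<in>?Q. c x (restrict v (?Sup x)) = c x (restrict ?z (?Sup x)))}
      = comp_candidates n WF c i j (?u i) (link_msg WF c ?u i)" for c
  proof -
    have "(\<forall>y\<in>?Y - ?F. v y = ?z y) \<longleftrightarrow>
        (\<forall>J\<in>composites i. J \<subseteq> A j \<longrightarrow> v J = WF (i,J) (restrict (?u i) J))" for v
      unfolding comp_msgs_def by auto
    moreover have "(\<forall>x\<in>?Q. c x (restrict v (?Sup x)) = c x (restrict ?z (?Sup x))) \<longleftrightarrow>
        (\<forall>k\<in>senders i. c (i,k) (restrict v (known_composites i k)) = link_msg WF c ?u i k)" for v
      unfolding link_msg_def by auto
    ultimately show ?thesis unfolding comp_candidates_def by auto
  qed
  have prodeq: "(\<Prod>x\<in>{x\<in>?Q. ?Sup x \<inter> T \<noteq> {}}. ?B x)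
      = (\<Prod>k\<in>{k\<in>senders i. known_composites i k \<inter> T \<noteq> {}}. link_size n i k)" for T
  proof -
    have "{x\<in>?Q. ?Sup x \<inter> T \<noteq> {}} = Pair i ` {k\<in>senders i. known_composites i k \<inter> T \<noteq> {}}"
      by (auto intro!: image_eqI)
    then show ?thesis by (simp add: prod.reindex inj_on_def)
  qed
  show ?thesis using confusable_bound unfolding seteq link_hashes_def[symmetric] comp_confusion_bound_def prodeq by simp
qed

definition "comp_confusions n WF HF m i j = real (card
   (comp_candidates n WF HF i j (sub_msgs n m i) (link_msg WF HF (sub_msgs n m) i)
     - {comp_msgs WF (sub_msgs n m) i}))"
definition "sub_confusions n WF m i j = real (card
   (sub_candidates n WF i j (sub_msgs n m i) (comp_msgs WF (sub_msgs n m) i)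
     - {restrict (sub_msgs n m i) (decode_set i j \<union> (A j \<inter> SP S (senders i)))}))"
definition "error_bound n =
   (\<Sum>i\<in>I. \<Sum>j\<in>SP S (senders i). comp_confusion_bound n i j + sub_confusion_bound n i j)"
definition "decoding_error n WF HF m \<longleftrightarrow> (\<exists>j. decoder n WF HF j (\<lambda>k. encoder n WF HF k m) m \<noteq> m j)"

lemma finite_comp_candidates: "finite (comp_candidates n WF HF i j uu Lk)"
  unfolding comp_candidates_def
  by (rule finite_subset[OF _ finite_PiE[of "composites i" "\<lambda>J. {1..comp_size n i J}"]]) auto

lemma finite_sub_candidates: "finite (sub_candidates n WF i j uu w)"
  unfolding sub_candidates_def
  by (rule finite_subset[OF _ finite_PiE[of "decode_set i j \<union> (A j \<inter> SP S (senders i))"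
      "\<lambda>t. {1..sub_size n i t}"]]) auto

lemma decoding_error_le_confusions:
  assumes WF: "WF \<in> comp_hashes n" and HF: "HF \<in> link_hashes n" and m: "m \<in> msg_set n total_rate"
  shows "(if decoding_error n WF HF m then 1 else 0::real)
    \<le> (\<Sum>i\<in>I. \<Sum>j\<in>SP S (senders i). comp_confusions n WF HF m i j + sub_confusions n WF m i j)"
proof (cases "decoding_error n WF HF m")
  case False
  then show ?thesis by (simp add: sum_nonneg comp_confusions_def sub_confusions_def)
next
  case True
  let ?c = "\<lambda>i j. comp_confusions n WF HF m i j + sub_confusions n WF m i j"
  have c_nonneg: "0 \<le> ?c i j" for i j by (simp add: comp_confusions_def sub_confusions_def)
  obtain i j where i: "i \<in> I" and j: "j \<in> SP S (senders i)"
    and confusion: "comp_confusion n WF HF m i j \<or> sub_confusion n WF m i j"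
    using True decoder_correct[OF WF HF m] unfolding decoding_error_def by blast
  have "comp_confusion n WF HF m i j \<Longrightarrow> 1 \<le> comp_confusions n WF HF m i j"
    unfolding comp_confusion_def comp_confusions_def
    by (rule card_Diff_singleton_ge_1[OF finite_comp_candidates])
  moreover have "sub_confusion n WF m i j \<Longrightarrow> 1 \<le> sub_confusions n WF m i j"
    unfolding sub_confusion_def sub_confusions_def
    by (rule card_Diff_singleton_ge_1[OF finite_sub_candidates])
  ultimately have "1 \<le> ?c i j"
    using confusion by (auto simp: comp_confusions_def sub_confusions_def add_increasing add_increasing2)
  also have "\<dots> \<le> (\<Sum>j\<in>SP S (senders i). ?c i j)"
    using j c_nonneg by (intro member_le_sum) auto
  also have "\<dots> \<le> (\<Sum>i\<in>I. \<Sum>j\<in>SP S (senders i). ?c i j)"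
    using i c_nonneg finite_pieces by (intro member_le_sum[where f = "\<lambda>i. \<Sum>j\<in>SP S (senders i). ?c i j"])
      (auto intro!: sum_nonneg)
  finally show ?thesis using True by simp
qed

lemma sum_decoding_error_le:
  assumes m: "m \<in> msg_set n total_rate"
  shows "(\<Sum>WF\<in>comp_hashes n. \<Sum>HF\<in>link_hashes n. if decoding_error n WF HF m then 1 else 0::real)
         \<le> real (card (comp_hashes n)) * real (card (link_hashes n)) * error_bound n"
proof -
  let ?W = "comp_hashes n" and ?H = "link_hashes n"
  let ?N = "real (card ?W) * real (card ?H)"
  have comp: "(\<Sum>WF\<in>?W. \<Sum>HF\<in>?H. comp_confusions n WF HF m i j) \<le> ?N * comp_confusion_bound n i j"
    if i: "i \<in> I" and j: "j \<in> SP S (senders i)" for i j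
  proof -
    have "(\<Sum>WF\<in>?W. \<Sum>HF\<in>?H. comp_confusions n WF HF m i j) \<le> (\<Sum>WF\<in>?W. real (card ?H) * comp_confusion_bound n i j)"
      by (intro sum_mono) (use sum_comp_confusions_le[OF _ m i j] in \<open>simp add: comp_confusions_def\<close>)
    then show ?thesis by simp
  qed
  have sub: "(\<Sum>WF\<in>?W. \<Sum>HF\<in>?H. sub_confusions n WF m i j) \<le> ?N * sub_confusion_bound n i j"
    if i: "i \<in> I" and j: "j \<in> SP S (senders i)" for i j
  proof -
    have "(\<Sum>WF\<in>?W. \<Sum>HF\<in>?H. sub_confusions n WF m i j) = real (card ?H) * (\<Sum>WF\<in>?W. sub_confusions n WF m i j)"
      by (simp add: sum_distrib_left)
    also have "\<dots> \<le> real (card ?H) * (real (card ?W) * sub_confusion_bound n i j)"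
      by (intro mult_left_mono) (use sum_sub_confusions_le[OF m i j] in \<open>simp_all add: sub_confusions_def\<close>)
    finally show ?thesis by (simp add: mult_ac)
  qed
  have "(\<Sum>WF\<in>?W. \<Sum>HF\<in>?H. if decoding_error n WF HF m then 1 else 0::real)
      \<le> (\<Sum>WF\<in>?W. \<Sum>HF\<in>?H. \<Sum>i\<in>I. \<Sum>j\<in>SP S (senders i).
           comp_confusions n WF HF m i j + sub_confusions n WF m i j)"
    by (intro sum_mono decoding_error_le_confusions[OF _ _ m])
  also have "\<dots> = (\<Sum>i\<in>I. \<Sum>j\<in>SP S (senders i).
      (\<Sum>WF\<in>?W. \<Sum>HF\<in>?H. comp_confusions n WF HF m i j) + (\<Sum>WF\<in>?W. \<Sum>HF\<in>?H. sub_confusions n WF m i j))"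
    unfolding sum_swap_nested2 by (simp only: sum.distrib)
  also have "\<dots> \<le> (\<Sum>i\<in>I. \<Sum>j\<in>SP S (senders i).
      ?N * comp_confusion_bound n i j + ?N * sub_confusion_bound n i j)"
    using comp sub by (intro sum_mono add_mono) auto
  also have "\<dots> = ?N * error_bound n"
    unfolding error_bound_def by (simp add: sum_distrib_left distrib_left)
  finally show ?thesis .
qed

lemma sub_rates_below_comp_rates:
  assumes i: "i \<in> I" and j: "j \<in> SP S (senders i)" and T: "T \<noteq> {}" "T \<subseteq> decode_set i j"
  shows "(\<Sum>t\<in>T. rate i $ t)
    < (\<Sum>J\<in>{J\<in>composites i. J \<subseteq> decode_set i j \<union> A j \<and> J \<inter> T \<noteq> {}}. comp_rate i J)"
proof -
  let ?JJ = "{J\<in>composites i. J \<subseteq> decode_set i j \<union> A j \<and> J \<inter> T \<noteq> {}}"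
  have "(\<Sum>J\<in>{J. J \<subseteq> decode_set i j \<union> (A j \<inter> SP S (senders i)) \<and> J \<inter> T \<noteq> {}}. comp_rate i J)
      = (\<Sum>J\<in>?JJ. comp_rate i J)"
  proof (rule sum.mono_neutral_right)
    show "?JJ \<subseteq> {J. J \<subseteq> decode_set i j \<union> (A j \<inter> SP S (senders i)) \<and> J \<inter> T \<noteq> {}}"
      using composites_subset[of _ i] by blast
    show "\<forall>J\<in>{J. J \<subseteq> decode_set i j \<union> (A j \<inter> SP S (senders i)) \<and> J \<inter> T \<noteq> {}} - ?JJ.
        comp_rate i J = 0"
      using comp_rate_outside[OF i] by auto
  qed simp
  with sub_rate_condition[OF i j T] show ?thesis by simp
qed

text \<open>A set E of composites unknown to receiver j is seen exactly by the senders in K below; no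
sender outside K knows any member of E, so condition (b) for K applies.\<close>

lemma comp_rates_below_link_rates:
  assumes i: "i \<in> I" and j: "j \<in> SP S (senders i)"
    and E: "E \<subseteq> {J\<in>composites i. \<not> J \<subseteq> A j}" "E \<noteq> {}"
  shows "(\<Sum>J\<in>E. comp_rate i J) < (\<Sum>k\<in>{k\<in>senders i. known_composites i k \<inter> E \<noteq> {}}. link_rate i k)"
proof -
  let ?K = "{k\<in>senders i. known_composites i k \<inter> E \<noteq> {}}"
  let ?SB = "{J \<in> Iset S ?K. J \<notin> Iset S (senders i - ?K) \<and> \<not> J \<subseteq> A j \<inter> SP S (senders i)}"
  have EC: "E \<subseteq> composites i" using E by auto
  have sender: "\<exists>k\<in>senders i. J \<subseteq> S k \<and> J \<noteq> {}" if "J \<in> E" for J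
    using that EC unfolding composites_def Iset_def by auto
  have Kne: "?K \<noteq> {}"
  proof -
    obtain J0 where "J0 \<in> E" using E by auto
    with sender EC show ?thesis unfolding known_composites_def by blast
  qed
  have ESB: "E \<subseteq> ?SB"
  proof
    fix J assume J: "J \<in> E"
    then obtain k where k: "k \<in> senders i" "J \<subseteq> S k" "J \<noteq> {}" using sender by blast
    have "k \<in> ?K" using k J EC unfolding known_composites_def by auto
    then have "J \<in> Iset S ?K" using k unfolding Iset_def by auto
    moreover have "J \<notin> Iset S (senders i - ?K)"
    proof
      assume "J \<in> Iset S (senders i - ?K)"
      then obtain k' where "k' \<in> senders i" "k' \<notin> ?K" "J \<subseteq> S k'" unfolding Iset_def by auto
      then show False using J EC unfolding known_composites_def by auto
    qed
    moreover have "\<not> J \<subseteq> A j \<inter> SP S (senders i)" using J E by auto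
    ultimately show "J \<in> ?SB" by auto
  qed
  have "(\<Sum>J\<in>E. comp_rate i J) \<le> (\<Sum>J\<in>?SB. comp_rate i J)"
  proof (rule sum_mono2)
    show "finite ?SB" by simp
    show "E \<subseteq> ?SB" by (rule ESB)
    fix J assume "J \<in> ?SB - E"
    then have "J \<in> composites i" unfolding composites_def Iset_def by auto
    then show "0 \<le> comp_rate i J" using comp_rate_nonneg[OF i] by auto
  qed
  also have "\<dots> < (\<Sum>k\<in>?K. link_rate i k)" using comp_rate_condition[OF i j Kne] by auto
  finally show ?thesis .
qed

lemma sub_confusion_bound_tendsto_zero:
  assumes i: "i \<in> I" and j: "j \<in> SP S (senders i)"
  shows "(\<lambda>n. sub_confusion_bound n i j) \<longlonglongrightarrow> 0"
  unfolding sub_confusion_bound_def comp_size_def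
proof (rule tendsto_null_sum)
  fix T assume "T \<in> {T. T \<subseteq> decode_set i j \<and> T \<noteq> {}}"
  then show "(\<lambda>n. real (\<Prod>t\<in>T. sub_size n i t) /
      real (\<Prod>J\<in>{J\<in>composites i. J \<subseteq> decode_set i j \<union> A j \<and> J \<inter> T \<noteq> {}}.
        (2::nat) ^ nat \<lfloor>real n * comp_rate i J\<rfloor>)) \<longlonglongrightarrow> 0"
    using sub_rates_below_comp_rates[OF i j] rate_nonneg[OF i]
    by (intro pow2_ratio_tendsto_zero[where a = "\<lambda>t. rate i $ t"]) (auto simp: sub_size_def)
qed

lemma comp_size_le_ceiling: "comp_size n i J \<le> 2 ^ nat \<lceil>real n * comp_rate i J\<rceil>"
  unfolding comp_size_def by (intro power_increasing nat_mono) simp_all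

lemma comp_confusion_bound_tendsto_zero:
  assumes i: "i \<in> I" and j: "j \<in> SP S (senders i)"
  shows "(\<lambda>n. comp_confusion_bound n i j) \<longlonglongrightarrow> 0"
  unfolding comp_confusion_bound_def link_size_def
proof (rule tendsto_null_sum)
  fix E assume E: "E \<in> {E. E \<subseteq> {J\<in>composites i. \<not> J \<subseteq> A j} \<and> E \<noteq> {}}"
  then have "\<forall>J\<in>E. 0 \<le> comp_rate i J" using comp_rate_nonneg[OF i] by auto
  then show "(\<lambda>n. real (\<Prod>J\<in>E. comp_size n i J) /
      real (\<Prod>k\<in>{k\<in>senders i. known_composites i k \<inter> E \<noteq> {}}.
        (2::nat) ^ nat \<lfloor>real n * link_rate i k\<rfloor>)) \<longlonglongrightarrow> 0"
    using comp_rates_below_link_rates[OF i j] E comp_size_le_ceiling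
    by (intro pow2_ratio_tendsto_zero[where a = "comp_rate i"]) auto
qed

lemma error_bound_tendsto_zero: "error_bound \<longlonglongrightarrow> 0"
proof -
  have "(\<lambda>n. error_bound n) \<longlonglongrightarrow> 0"
    unfolding error_bound_def
    by (intro tendsto_null_sum tendsto_add_zero comp_confusion_bound_tendsto_zero
        sub_confusion_bound_tendsto_zero) auto
  then show ?thesis by simp
qed

lemma msg_set_PiE: "msg_set n total_rate = PiE UNIV (\<lambda>t. {1..msg_size n t})"
  unfolding msg_set_iff[symmetric, of _ n] by (auto simp: PiE_iff msg_set_iff)

lemma msg_set_finite_nonempty: "finite (msg_set n total_rate)" "msg_set n total_rate \<noteq> {}"
proof -
  show "finite (msg_set n total_rate)" unfolding msg_set_PiE by (rule finite_PiE) auto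
  have "(\<lambda>_. 1) \<in> msg_set n total_rate" unfolding msg_set_iff by (auto simp: msg_size_def)
  then show "msg_set n total_rate \<noteq> {}" by auto
qed

lemma err_prob_eq_average:
  "err_prob n total_rate (encoder n WF HF) (decoder n WF HF)
   = (\<Sum>m\<in>msg_set n total_rate. if decoding_error n WF HF m then 1 else 0) / real (card (msg_set n total_rate))"
proof -
  have "real (card {m \<in> msg_set n total_rate. decoding_error n WF HF m})
      = (\<Sum>m\<in>msg_set n total_rate. if decoding_error n WF HF m then 1 else 0)"
    using msg_set_finite_nonempty(1) by (simp add: sum.If_cases Int_def)
  then show ?thesis unfolding err_prob_def decoding_error_def by simp
qed

lemma exists_good_code:
  "\<exists>WF\<in>comp_hashes n. \<exists>HF\<in>link_hashes n.
     err_prob n total_rate (encoder n WF HF) (decoder n WF HF) \<le> error_bound n"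
proof (rule ccontr)
  let ?M = "msg_set n total_rate" and ?W = "comp_hashes n" and ?H = "link_hashes n"
  let ?e = "\<lambda>WF HF. err_prob n total_rate (encoder n WF HF) (decoder n WF HF)"
  let ?b = "\<lambda>WF HF m. if decoding_error n WF HF m then 1 else 0::real"
  assume "\<not> ?thesis"
  then have all_bad: "\<forall>WF\<in>?W. \<forall>HF\<in>?H. error_bound n < ?e WF HF" by (auto simp: not_le)
  have Mpos: "real (card ?M) > 0" using msg_set_finite_nonempty by (simp add: card_gt_0_iff)
  have "(\<Sum>WF\<in>?W. \<Sum>HF\<in>?H. error_bound n) < (\<Sum>WF\<in>?W. \<Sum>HF\<in>?H. ?e WF HF)"
    using all_bad comp_hashes_finite_nonempty link_hashes_finite_nonempty by (intro sum_strict_mono) auto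
  also have "\<dots> = (\<Sum>WF\<in>?W. \<Sum>HF\<in>?H. \<Sum>m\<in>?M. ?b WF HF m) / real (card ?M)"
    unfolding err_prob_eq_average by (simp add: sum_divide_distrib)
  also have "(\<Sum>WF\<in>?W. \<Sum>HF\<in>?H. \<Sum>m\<in>?M. ?b WF HF m) = (\<Sum>m\<in>?M. \<Sum>WF\<in>?W. \<Sum>HF\<in>?H. ?b WF HF m)"
  proof -
    have "(\<Sum>WF\<in>?W. \<Sum>HF\<in>?H. \<Sum>m\<in>?M. ?b WF HF m) = (\<Sum>WF\<in>?W. \<Sum>m\<in>?M. \<Sum>HF\<in>?H. ?b WF HF m)"
      by (rule sum.cong[OF refl], rule sum.swap)
    also have "\<dots> = (\<Sum>m\<in>?M. \<Sum>WF\<in>?W. \<Sum>HF\<in>?H. ?b WF HF m)" by (rule sum.swap)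
    finally show ?thesis .
  qed
  also have "(\<Sum>m\<in>?M. \<Sum>WF\<in>?W. \<Sum>HF\<in>?H. ?b WF HF m) / real (card ?M) \<le>
        (\<Sum>m\<in>?M. real (card ?W) * real (card ?H) * error_bound n) / real (card ?M)"
    by (intro divide_right_mono sum_mono sum_decoding_error_le) auto
  also have "\<dots> = real (card ?W) * real (card ?H) * error_bound n" using Mpos by simp
  finally show False by simp
qed

lemma achievable_total_rate: "achievable S A C total_rate"
proof -
  have "\<forall>n. \<exists>p. fst p \<in> comp_hashes n \<and> snd p \<in> link_hashes n \<and>
     err_prob n total_rate (encoder n (fst p) (snd p)) (decoder n (fst p) (snd p)) \<le> error_bound n"
    using exists_good_code by fastforce
  then obtain p where p: "\<forall>n. fst (p n) \<in> comp_hashes n \<and> snd (p n) \<in> link_hashes n \<and>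
     err_prob n total_rate (encoder n (fst (p n)) (snd (p n))) (decoder n (fst (p n)) (snd (p n)))
       \<le> error_bound n"
    by (rule choice[THEN exE])
  let ?f = "\<lambda>n. encoder n (fst (p n)) (snd (p n))" and ?g = "\<lambda>n. decoder n (fst (p n)) (snd (p n))"
  have code: "\<forall>n. is_code S A C n total_rate (?f n) (?g n)" using is_code_encoder_decoder p by blast
  have lim: "(\<lambda>n. err_prob n total_rate (?f n) (?g n)) \<longlonglongrightarrow> 0"
  proof (rule tendsto_sandwich[of "\<lambda>_. 0" _ sequentially error_bound])
    show "\<forall>\<^sub>F n in sequentially. 0 \<le> err_prob n total_rate (?f n) (?g n)"
      unfolding err_prob_def by simp
    show "\<forall>\<^sub>F n in sequentially. err_prob n total_rate (?f n) (?g n) \<le> error_bound n" using p by simp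
    show "error_bound \<longlonglongrightarrow> 0" by (rule error_bound_tendsto_zero)
  qed simp
  have nonneg: "\<forall>i. total_rate $ i \<ge> 0"
    unfolding total_rate_def using rate_nonneg by (simp add: sum_nonneg)
  show ?thesis unfolding achievable_def
    by (intro conjI nonneg exI[where x = ?f] exI[where x = ?g]) (use code lim in auto)
qed

end

lemma achievable_time_sharing:
  fixes S :: "'k::finite \<Rightarrow> 'm::finite set" and T :: "'t set"
  assumes T: "finite T" "\<forall>t\<in>T. u t > 0" "sum u T = 1"
    and adm: "\<forall>t\<in>T. admissible C (Pis t) (CPi t)"
    and reg: "\<forall>t\<in>T. \<forall>P\<in>Pis t. r t P \<in> region_P S A P (CPi t P)"
  shows "achievable S A C (\<Sum>t\<in>T. u t *\<^sub>R (\<Sum>P\<in>Pis t. r t P))"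
proof -
  let ?I = "Sigma T Pis"
  have "\<forall>i\<in>?I. \<exists>D\<gamma>. region_witness S A (snd i) (CPi (fst i) (snd i)) (fst D\<gamma>) (r (fst i) (snd i)) (snd D\<gamma>)"
    using reg by (auto simp: region_P_iff_witness)
  then obtain D\<gamma> where D\<gamma>: "\<forall>i\<in>?I.
      region_witness S A (snd i) (CPi (fst i) (snd i)) (fst (D\<gamma> i)) (r (fst i) (snd i)) (snd (D\<gamma> i))"
    by (rule bchoice[THEN exE])
  interpret composite_coding S A C ?I snd "\<lambda>i k. u (fst i) * CPi (fst i) (snd i) k"
    "\<lambda>i. fst (D\<gamma> i)" "\<lambda>i. u (fst i) *\<^sub>R r (fst i) (snd i)" "\<lambda>i J. u (fst i) * snd (D\<gamma> i) J"
  proof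
    show "finite ?I" using T(1) by simp
    show "\<forall>i\<in>?I. region_witness S A (snd i) (\<lambda>k. u (fst i) * CPi (fst i) (snd i) k) (fst (D\<gamma> i))
        (u (fst i) *\<^sub>R r (fst i) (snd i)) (\<lambda>J. u (fst i) * snd (D\<gamma> i) J)"
      using D\<gamma> T(2) by (auto intro: region_witness_scaleR)
    show "\<forall>i\<in>?I. \<forall>k\<in>snd i. u (fst i) * CPi (fst i) (snd i) k > 0"
      using adm T(2) unfolding admissible_def by auto
    show "\<forall>k. (\<Sum>i\<in>{i\<in>?I. k \<in> snd i}. u (fst i) * CPi (fst i) (snd i) k) \<le> C k"
    proof
      fix k
      have "{i\<in>?I. k \<in> snd i} = Sigma T (\<lambda>t. {P\<in>Pis t. k \<in> P})" by auto
      moreover have "(\<Sum>t\<in>T. \<Sum>P\<in>{P\<in>Pis t. k \<in> P}. u t * CPi t P k)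
          = (\<Sum>i\<in>Sigma T (\<lambda>t. {P\<in>Pis t. k \<in> P}). u (fst i) * CPi (fst i) (snd i) k)"
        using T(1) by (subst sum.Sigma) (auto simp: split_def)
      ultimately have "(\<Sum>i\<in>{i\<in>?I. k \<in> snd i}. u (fst i) * CPi (fst i) (snd i) k)
          = (\<Sum>t\<in>T. u t * (\<Sum>P\<in>{P\<in>Pis t. k \<in> P}. CPi t P k))"
        by (simp add: sum_distrib_left)
      also have "\<dots> \<le> (\<Sum>t\<in>T. u t * C k)"
        using adm T(2) unfolding admissible_def by (intro sum_mono mult_left_mono) auto
      also have "\<dots> = C k" using T(3) by (simp add: sum_distrib_right[symmetric])
      finally show "(\<Sum>i\<in>{i\<in>?I. k \<in> snd i}. u (fst i) * CPi (fst i) (snd i) k) \<le> C k" .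
    qed
  qed
  have "total_rate = (\<Sum>t\<in>T. u t *\<^sub>R (\<Sum>P\<in>Pis t. r t P))"
    unfolding total_rate_def using T(1)
    by (simp add: scaleR_sum_right sum.Sigma split_def)
  then show ?thesis using achievable_total_rate by simp
qed

lemma R_CLS_subset_capacity_region:
  fixes S :: "'k::finite \<Rightarrow> 'm::finite set"
  shows "R_CLS S A C \<subseteq> capacity_region S A C"
proof
  fix R assume "R \<in> R_CLS S A C"
  then obtain X u where X: "finite X" "\<forall>x\<in>X. 0 \<le> u x" "sum u X = 1"
    and gen: "X \<subseteq> \<Union>{R_CLS_part S A Pis CPi | Pis CPi. link_sender_partition Pis \<and> admissible C Pis CPi}"
    and R: "R = (\<Sum>x\<in>X. u x *\<^sub>R x)"
    unfolding R_CLS_def convex_hull_explicit by blast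
  let ?T = "{x\<in>X. u x > 0}"
  have "sum u ?T = sum u X"
    by (rule sum.mono_neutral_left) (use X in \<open>auto simp: less_le\<close>)
  with X have T: "finite ?T" "\<forall>t\<in>?T. u t > 0" "sum u ?T = 1" by auto
  have R_T: "R = (\<Sum>x\<in>?T. u x *\<^sub>R x)"
    unfolding R by (rule sum.mono_neutral_right) (use X in \<open>auto simp: less_le\<close>)
  have "\<forall>t\<in>?T. \<exists>p. admissible C (fst p) (fst (snd p)) \<and>
      (\<forall>P\<in>fst p. snd (snd p) P \<in> region_P S A P (fst (snd p) P)) \<and> t = (\<Sum>P\<in>fst p. snd (snd p) P)"
  proof
    fix t assume "t \<in> ?T"
    then obtain Pis CPi where adm: "admissible C Pis CPi" and part: "t \<in> R_CLS_part S A Pis CPi"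
      using gen by blast
    obtain r where "\<forall>P\<in>Pis. r P \<in> region_P S A P (CPi P)" "t = (\<Sum>P\<in>Pis. r P)"
      using R_CLS_part_eq_sum[OF part] .
    then show "\<exists>p. admissible C (fst p) (fst (snd p)) \<and>
        (\<forall>P\<in>fst p. snd (snd p) P \<in> region_P S A P (fst (snd p) P)) \<and> t = (\<Sum>P\<in>fst p. snd (snd p) P)"
      using adm by (intro exI[of _ "(Pis, CPi, r)"]) simp
  qed
  then obtain p where p: "\<forall>t\<in>?T. admissible C (fst (p t)) (fst (snd (p t))) \<and>
      (\<forall>P\<in>fst (p t). snd (snd (p t)) P \<in> region_P S A P (fst (snd (p t)) P)) \<and>
      t = (\<Sum>P\<in>fst (p t). snd (snd (p t)) P)"
    by (rule bchoice[THEN exE])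
  have "\<forall>t\<in>?T. admissible C (fst (p t)) (fst (snd (p t)))"
    and "\<forall>t\<in>?T. \<forall>P\<in>fst (p t). snd (snd (p t)) P \<in> region_P S A P (fst (snd (p t)) P)"
    using p by auto
  then have "achievable S A C (\<Sum>t\<in>?T. u t *\<^sub>R (\<Sum>P\<in>fst (p t). snd (snd (p t)) P))"
    by (rule achievable_time_sharing[OF T])
  moreover have "R = (\<Sum>t\<in>?T. u t *\<^sub>R (\<Sum>P\<in>fst (p t). snd (snd (p t)) P))"
    unfolding R_T using p by (intro sum.cong) auto
  ultimately have "achievable S A C R" by simp
  then show "R \<in> capacity_region S A C"
    unfolding capacity_region_def using closure_subset by blast
qed

theorem proposition3:
  fixes S :: "'k::finite \<Rightarrow> 'm::finite set"
    and A :: "'m \<Rightarrow> 'm set"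
    and C :: "'k \<Rightarrow> real"
  assumes "inj S"
    and "(\<Union>k. S k) = UNIV"
    and "\<forall>j. j \<notin> A j"
    and "\<forall>k. C k > 0"
  shows "R_CLS S A C \<subseteq> capacity_region S A C"
  by (rule R_CLS_subset_capacity_region)

end
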